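(* Let $K\subset\mathbb{R}^n$ be a closed set whose complement $K^c$ is a bounded open set, $\alpha\ge0$ and $\lambda>0$. Let $y\in(K^{\oplus\alpha})^c\setminus\mathrm{ax}_\lambda^\alpha(K)$ and let $s\mapsto y(s)$ be the trajectory $t\mapsto\Phi_K(t,y)$ parametrized by arc length, so $y(0)=y$. Assume $R_K(y)-\alpha>\lambda$ and that for some $S>0$, $y(S)\notin\mathrm{ax}_\lambda^\alpha(K)$. Then $$\big(R_K(y(S))-\alpha\big)^2\ge(S_0+S)^2+\lambda^2,$$ where $S_0>0$ is defined by $S_0^2=(R_K(y)-\alpha)^2-\lambda^2$.
   Context: For a closed set $K\subset\mathbb{R}^n$ with bounded open complement: $R_K(x)=d(x,K)$; $\Theta_K(x)=\{y\in K:\|x-y\|=R_K(x)\}$; for bounded $S$, $\mathrm{center}(S)$ and $\mathrm{radius}(S)$ are the center and radius of the smallest ball enclosing $S$; $\mathcal F_K(x)=\mathrm{radius}(\Theta_K(x))$; for $x\notin K$, $\nabla_K(x)=(x-\mathrm{center}(\Theta_K(x)))/R_K(x)$. $\Phi_K:[0,\infty)\times K^c\to K^c$ is the flow of $\nabla_K$: the continuous (locally Lipschitz) semiflow with $\Phi_K(0,x)=x$, $\Phi_K(t_1,\Phi_K(t_2,x))=\Phi_K(t_1+t_2,x)$ and right derivative $\frac{d}{dt^+}\Phi_K(t,x)=\nabla_K(\Phi_K(t,x))$. $K^{\oplus\alpha}=\{x:d(x,K)\le\alpha\}$. $\mathrm{ax}_\lambda^\alpha(K)=\{x:\mathcal F_{K^{\oplus\alpha}}(x)\ge\lambda\}$.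 *)

theory Defs
  imports "HOL-Analysis.Analysis"
begin

definition distK :: "'a::euclidean_space set \<Rightarrow> 'a \<Rightarrow> real" where
  "distK K x = infdist x K"

definition Theta :: "'a::euclidean_space set \<Rightarrow> 'a \<Rightarrow> 'a set" where
  "Theta K x = {y \<in> K. dist x y = distK K x}"

definition enc_radius :: "'a::euclidean_space set \<Rightarrow> real" where
  "enc_radius S = Inf {r. \<exists>c. S \<subseteq> cball c r}"

definition enc_center :: "'a::euclidean_space set \<Rightarrow> 'a" where
  "enc_center S = (SOME c. S \<subseteq> cball c (enc_radius S))"

definition FK :: "'a::euclidean_space set \<Rightarrow> 'a \<Rightarrow> real" where
  "FK K x = enc_radius (Theta K x)"

definition gradK :: "'a::euclidean_space set \<Rightarrow> 'a \<Rightarrow> 'a" where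
  "gradK K x = (x - enc_center (Theta K x)) /\<^sub>R distK K x"

definition is_flow :: "'a::euclidean_space set \<Rightarrow> (real \<Rightarrow> 'a \<Rightarrow> 'a) \<Rightarrow> bool" where
  "is_flow K Phi \<longleftrightarrow>
     (\<forall>t\<ge>0. \<forall>x\<in>-K. Phi t x \<in> -K) \<and>
     (\<forall>x\<in>-K. Phi 0 x = x) \<and>
     (\<forall>t1\<ge>0. \<forall>t2\<ge>0. \<forall>x\<in>-K. Phi t1 (Phi t2 x) = Phi (t1 + t2) x) \<and>
     continuous_on ({0..} \<times> -K) (\<lambda>(t, x). Phi t x) \<and>
     (\<forall>x\<in>-K. \<forall>t\<ge>0. ((\<lambda>s. Phi s x) has_vector_derivative gradK K (Phi t x)) (at t within {t..}))"

definition offset :: "'a::euclidean_space set \<Rightarrow> real \<Rightarrow> 'a set" where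
  "offset K \<alpha> = {x. infdist x K \<le> \<alpha>}"

definition axis :: "real \<Rightarrow> real \<Rightarrow> 'a::euclidean_space set \<Rightarrow> 'a set" where
  "axis l \<alpha> K = {x. FK (offset K \<alpha>) x \<ge> l}"

definition arc_length :: "(real \<Rightarrow> 'a::metric_space) \<Rightarrow> real \<Rightarrow> real \<Rightarrow> real" where
  "arc_length \<gamma> a b = Sup {(\<Sum>i<n. dist (\<gamma> (p i)) (\<gamma> (p (Suc i)))) | p n.
       p 0 = a \<and> p n = b \<and> (\<forall>i<n. p i \<le> p (Suc i))}"

end

theory Submission
  imports Defs
begin

text \<open>Reparametrize the gradient flow so that it solves \<open>z' = z - c(z)\<close>, where \<open>c(z)\<close> is the
  center of the smallest ball enclosing the set \<open>\<Theta>(z)\<close> of nearest points of \<open>K\<close>, and write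
  \<open>w = \<parallel>z - c(z)\<parallel>\<close>. Since \<open>\<Theta>(z)\<close> lies on the sphere of radius \<open>R\<close> around \<open>z\<close>,
  \<open>F\<^sup>2 = R\<^sup>2 - w\<^sup>2\<close> and \<open>(R\<^sup>2)' \<ge> 2 w\<^sup>2\<close>. The map \<open>c\<close> is monotone, so the speed \<open>w\<close> grows at
  most like \<open>e\<^sup>u\<close>; together this makes both \<open>R\<close> and \<open>F\<close> nondecreasing along the flow.

  A homothety centered at \<open>z\<close> compares the nearest points of \<open>K\<close> and of \<open>K\<^sup>\<oplus>\<^sup>\<alpha>\<close> and gives
  \<open>(R - \<alpha>) F \<le> \<lambda> R\<close> at the end point, which is off the \<open>\<lambda>\<close>-axis; since \<open>R\<close> and \<open>F\<close> are
  nondecreasing, this holds along the whole trajectory. There it says exactly that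
  \<open>g = \<surd>((R - \<alpha>)\<^sup>2 - \<lambda>\<^sup>2)\<close> grows at least as fast as the curve moves, so the arc length is at
  most \<open>g(y(S)) - g(y) = g(y(S)) - S\<^sub>0\<close>. As only one-sided derivatives are available, all
  monotonicity arguments go through lower right Dini derivatives.\<close>

section \<open>Smallest enclosing balls\<close>

lemma enc_radius_le:
  fixes S :: "'a::euclidean_space set"
  assumes "S \<noteq> {}" and "S \<subseteq> cball c r"
  shows "enc_radius S \<le> r"
  unfolding enc_radius_def
proof (rule cInf_lower)
  show "bdd_below {r. \<exists>c. S \<subseteq> cball c r}"
  proof (rule bdd_belowI)
    fix r assume "r \<in> {r. \<exists>c. S \<subseteq> cball c r}"
    then show "0 \<le> r"
      using assms(1) by (auto simp: subset_iff) (meson order_trans zero_le_dist)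
  qed
qed (use assms(2) in auto)

lemma enc_radius_attained:
  fixes S :: "'a::euclidean_space set"
  assumes "compact S" and "S \<noteq> {}"
  shows "\<exists>c. S \<subseteq> cball c (enc_radius S)"
proof -
  obtain s0 where s0: "s0 \<in> S"
    using assms(2) by blast
  obtain r0 where r0: "S \<subseteq> cball s0 r0" "0 \<le> r0"
    using bounded_any_center[of S s0] compact_imp_bounded[OF assms(1)] s0
    by (metis mem_cball subsetI zero_le_dist order_trans)
  define feasible where "feasible = {p :: 'a \<times> real. S \<subseteq> cball (fst p) (snd p)}"
  define A where "A = feasible \<inter> (cball s0 r0 \<times> {0..r0})"
  have "feasible = (\<Inter>\<theta>\<in>S. {p. dist (fst p) \<theta> \<le> snd p})"
    unfolding feasible_def by auto
  then have "closed feasible"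
    by (auto intro!: closed_INT closed_Collect_le continuous_intros)
  then have "compact A"
    unfolding A_def by (intro closed_Int_compact compact_Times compact_cball compact_Icc)
  moreover have "(s0, r0) \<in> A"
    using r0 unfolding A_def feasible_def by auto
  moreover have "continuous_on A snd"
    by (intro continuous_intros)
  ultimately obtain p where "p \<in> A" and p_min: "\<And>q. q \<in> A \<Longrightarrow> snd p \<le> snd q"
    using continuous_attains_inf[of A snd] by blast
  then have p: "S \<subseteq> cball (fst p) (snd p)"
    unfolding A_def feasible_def by auto
  have "snd p \<le> r" if "S \<subseteq> cball c r" for c r
  proof (cases "r \<le> r0")
    case True
    have "dist c s0 \<le> r"
      using that s0 by auto
    moreover have "0 \<le> r"
      using \<open>dist c s0 \<le> r\<close> zero_le_dist order_trans by blast
    ultimately have "(c, r) \<in> A"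
      using that True unfolding A_def feasible_def by (simp add: dist_commute)
    then show ?thesis
      using p_min by fastforce
  next
    case False
    then show ?thesis
      using p_min[OF \<open>(s0, r0) \<in> A\<close>] by simp
  qed
  then have "snd p \<le> enc_radius S"
    unfolding enc_radius_def using p by (intro cInf_greatest) auto
  then show ?thesis
    using p enc_radius_le[OF assms(2) p] by (metis order_antisym)
qed

lemma compact_subset_enc_ball:
  fixes S :: "'a::euclidean_space set"
  assumes "compact S" and "S \<noteq> {}"
  shows "S \<subseteq> cball (enc_center S) (enc_radius S)"
  unfolding enc_center_def using enc_radius_attained[OF assms] by (rule someI_ex)

lemma enc_radius_nonneg:
  fixes S :: "'a::euclidean_space set"
  assumes "compact S" and "S \<noteq> {}"
  shows "0 \<le> enc_radius S"
proof -
  obtain \<theta> where "\<theta> \<in> S"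
    using assms(2) by blast
  then have "dist (enc_center S) \<theta> \<le> enc_radius S"
    using compact_subset_enc_ball[OF assms] by auto
  then show ?thesis
    using zero_le_dist order_trans by blast
qed

lemma enc_radius_sq_le:
  fixes S :: "'a::euclidean_space set"
  assumes "compact S" and "S \<noteq> {}" and "\<And>\<theta>. \<theta> \<in> S \<Longrightarrow> (dist c \<theta>)\<^sup>2 \<le> M"
  shows "(enc_radius S)\<^sup>2 \<le> M"
proof -
  have "0 \<le> M"
    using assms(2,3) by (meson ex_in_conv order_trans zero_le_power2)
  have "S \<subseteq> cball c (sqrt M)"
    using assms(3) by (auto simp: real_le_rsqrt)
  then have "enc_radius S \<le> sqrt M"
    by (rule enc_radius_le[OF assms(2)])
  then show ?thesis
    using enc_radius_nonneg[OF assms(1,2)] \<open>0 \<le> M\<close> by (metis power_mono real_sqrt_pow2)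
qed

text \<open>Moving the center to its projection onto the convex hull would bring it closer to every
  point of \<open>S\<close>.\<close>

lemma enc_center_in_convex_hull:
  fixes S :: "'a::euclidean_space set"
  assumes "compact S" and "S \<noteq> {}"
  shows "enc_center S \<in> convex hull S"
proof (rule ccontr)
  define c where "c = enc_center S"
  assume "enc_center S \<notin> convex hull S"
  then have "c \<notin> convex hull S"
    by (simp add: c_def)
  have hull: "closed (convex hull S)" "convex hull S \<noteq> {}"
    using assms by (auto simp: compact_convex_hull compact_imp_closed)
  obtain p where p: "p \<in> convex hull S" and p_min: "\<And>q. q \<in> convex hull S \<Longrightarrow> dist c p \<le> dist c q"
    using distance_attains_inf[OF hull] by blast
  have "0 < dist c p"
    using p \<open>c \<notin> convex hull S\<close> by auto
  have "(dist p \<theta>)\<^sup>2 \<le> (enc_radius S)\<^sup>2 - (dist c p)\<^sup>2" if "\<theta> \<in> S" for \<theta>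
  proof -
    have "\<theta> \<in> convex hull S"
      using that by (rule hull_inc)
    then have obtuse: "(c - p) \<bullet> (\<theta> - p) \<le> 0"
      using any_closest_point_dot[OF convex_convex_hull hull(1) p] p_min by blast
    have "(dist c \<theta>)\<^sup>2 \<le> (enc_radius S)\<^sup>2"
      using compact_subset_enc_ball[OF assms] that enc_radius_nonneg[OF assms]
      by (auto simp: c_def intro!: power_mono)
    moreover have "(dist c \<theta>)\<^sup>2 = (dist p \<theta>)\<^sup>2 + (dist c p)\<^sup>2 - 2 * ((c - p) \<bullet> (\<theta> - p))"
      by (simp add: dist_norm power2_norm_eq_inner inner_diff_left inner_diff_right inner_commute
          algebra_simps)
    ultimately show ?thesis
      using obtuse by linarith
  qed
  then have "(enc_radius S)\<^sup>2 \<le> (enc_radius S)\<^sup>2 - (dist c p)\<^sup>2"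
    by (rule enc_radius_sq_le[OF assms])
  then show False
    using \<open>0 < dist c p\<close> by simp
qed

lemma power2_norm_diff:
  fixes a b :: "'a::real_inner"
  shows "(norm (a - b))\<^sup>2 = (norm a)\<^sup>2 - 2 * (a \<bullet> b) + (norm b)\<^sup>2"
  by (simp add: power2_norm_eq_inner inner_diff_left inner_diff_right inner_commute)

lemma linear_term_zero_if_quadratic_nonneg:
  fixes D C :: real
  assumes "\<And>s. \<bar>s\<bar> \<le> 1 \<Longrightarrow> 0 \<le> s * D + s\<^sup>2 * C"
  shows "D = 0"
proof (rule ccontr)
  assume "D \<noteq> 0"
  define M where "M = \<bar>D\<bar> + \<bar>C\<bar> + 1"
  have "M > 0" "\<bar>D\<bar> < M" "C < M"
    unfolding M_def by auto
  define s where "s = - D / M"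
  have "\<bar>s\<bar> = \<bar>D\<bar> / M"
    using \<open>M > 0\<close> by (simp add: s_def)
  then have "\<bar>s\<bar> \<le> 1"
    using \<open>M > 0\<close> \<open>\<bar>D\<bar> < M\<close> by simp
  moreover have "s * D + s\<^sup>2 * C = D\<^sup>2 / M * (C / M - 1)"
    using \<open>M > 0\<close> by (simp add: s_def power2_eq_square field_simps)
  moreover have "D\<^sup>2 / M * (C / M - 1) < 0"
    using \<open>D \<noteq> 0\<close> \<open>M > 0\<close> \<open>C < M\<close> by (intro mult_pos_neg) auto
  ultimately show False
    using assms by fastforce
qed

text \<open>Moving the center along the line through \<open>x\<close> changes the squared enclosing radius by
  \<open>s D + s\<^sup>2 w\<^sup>2\<close> with \<open>D = R\<^sup>2 - w\<^sup>2 - F\<^sup>2\<close>; minimality of \<open>F\<close> forces \<open>D = 0\<close>.\<close>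

lemma enc_radius_sphere:
  fixes S :: "'a::euclidean_space set"
  assumes "compact S" and "S \<noteq> {}" and "\<And>\<theta>. \<theta> \<in> S \<Longrightarrow> dist x \<theta> = R"
  shows "(enc_radius S)\<^sup>2 = R\<^sup>2 - (norm (x - enc_center S))\<^sup>2"
proof -
  define c where "c = enc_center S"
  define F where "F = enc_radius S"
  define w where "w = norm (x - c)"
  have "0 \<le> s * (R\<^sup>2 - w\<^sup>2 - F\<^sup>2) + s\<^sup>2 * w\<^sup>2" if "\<bar>s\<bar> \<le> 1" for s
  proof -
    have "F\<^sup>2 \<le> F\<^sup>2 + s * (R\<^sup>2 - w\<^sup>2 - F\<^sup>2) + s\<^sup>2 * w\<^sup>2"
    proof (rule enc_radius_sq_le[OF assms(1,2), of "c + s *\<^sub>R (x - c)", folded F_def])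
      fix \<theta> assume "\<theta> \<in> S"
      define P where "P = (\<theta> - c) \<bullet> (x - c)"
      define q where "q = (norm (\<theta> - c))\<^sup>2"
      have "q \<le> F\<^sup>2"
        using compact_subset_enc_ball[OF assms(1,2)] \<open>\<theta> \<in> S\<close> enc_radius_nonneg[OF assms(1,2)]
        by (auto simp: q_def c_def F_def dist_norm norm_minus_commute intro!: power_mono)
      then have shrink: "(1 - s) * q \<le> (1 - s) * F\<^sup>2"
        using that by (intro mult_left_mono) auto
      have R2: "R\<^sup>2 = q - 2 * P + w\<^sup>2"
        using assms(3)[OF \<open>\<theta> \<in> S\<close>] power2_norm_diff[of "\<theta> - c" "x - c"]
        by (simp add: P_def q_def w_def dist_norm norm_minus_commute)
      have "dist (c + s *\<^sub>R (x - c)) \<theta> = norm ((\<theta> - c) - s *\<^sub>R (x - c))"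
        by (simp add: dist_norm norm_minus_commute algebra_simps)
      then have "(dist (c + s *\<^sub>R (x - c)) \<theta>)\<^sup>2 = q - 2 * s * P + s\<^sup>2 * w\<^sup>2"
        using power2_norm_diff[of "\<theta> - c" "s *\<^sub>R (x - c)"]
        by (simp add: P_def q_def w_def power_mult_distrib)
      then show "(dist (c + s *\<^sub>R (x - c)) \<theta>)\<^sup>2 \<le> F\<^sup>2 + s * (R\<^sup>2 - w\<^sup>2 - F\<^sup>2) + s\<^sup>2 * w\<^sup>2"
        unfolding R2 using shrink by (simp add: algebra_simps)
    qed
    then show ?thesis
      by simp
  qed
  then have "R\<^sup>2 - w\<^sup>2 - F\<^sup>2 = 0"
    by (rule linear_term_zero_if_quadratic_nonneg)
  then show ?thesis
    by (simp add: F_def w_def c_def)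
qed

section \<open>Nearest points and their enclosing ball\<close>

lemma distK_pos:
  fixes K :: "'a::euclidean_space set"
  assumes "closed K" and "K \<noteq> {}" and "x \<notin> K"
  shows "0 < distK K x"
  unfolding distK_def using assms by (rule infdist_pos_not_in_closed)

lemma Theta_nonempty:
  fixes K :: "'a::euclidean_space set"
  assumes "closed K" and "K \<noteq> {}"
  shows "Theta K x \<noteq> {}"
  using infdist_attains_inf[OF assms, of x] unfolding Theta_def distK_def
  by (metis (mono_tags) empty_iff mem_Collect_eq)

lemma compact_Theta:
  fixes K :: "'a::euclidean_space set"
  assumes "closed K"
  shows "compact (Theta K x)"
proof -
  have "Theta K x = K \<inter> sphere x (distK K x)"
    unfolding Theta_def by auto
  then show ?thesis
    using assms by (simp add: closed_Int_compact)
qed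

lemma dist_Theta_le:
  assumes "\<theta> \<in> Theta K z"
  shows "dist x \<theta> \<le> distK K x + 2 * dist z x"
proof -
  have "dist z \<theta> \<le> distK K x + dist z x"
    using assms infdist_triangle[of z K x] unfolding Theta_def distK_def by auto
  then show ?thesis
    using dist_triangle[of x \<theta> z] by (simp add: dist_commute)
qed

lemma distK_sq_ge:
  fixes K :: "'a::euclidean_space set"
  assumes "\<theta> \<in> Theta K z"
  shows "(distK K x)\<^sup>2 + 2 * ((z - x) \<bullet> (x - \<theta>)) \<le> (distK K z)\<^sup>2"
proof -
  have "distK K x \<le> norm (x - \<theta>)"
    using assms infdist_le[of \<theta> K x] unfolding Theta_def distK_def by (simp add: dist_norm)
  then have "(distK K x)\<^sup>2 \<le> (norm (x - \<theta>))\<^sup>2"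
    by (simp add: distK_def infdist_nonneg power_mono)
  moreover have "(distK K z)\<^sup>2 = (norm ((z - x) - (\<theta> - x)))\<^sup>2"
    using assms unfolding Theta_def by (simp add: dist_norm)
  then have "(distK K z)\<^sup>2 = (norm (z - x))\<^sup>2 - 2 * ((z - x) \<bullet> (\<theta> - x)) + (norm (x - \<theta>))\<^sup>2"
    by (simp only: power2_norm_diff norm_minus_commute[of \<theta> x])
  moreover have "(z - x) \<bullet> (\<theta> - x) = - ((z - x) \<bullet> (x - \<theta>))"
    by (simp add: inner_diff_right)
  ultimately show ?thesis
    using zero_le_power2[of "norm (z - x)"] by linarith
qed

definition centerK :: "'a::euclidean_space set \<Rightarrow> 'a \<Rightarrow> 'a" where
  "centerK K x = enc_center (Theta K x)"

lemma FK_nonneg: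
  fixes K :: "'a::euclidean_space set"
  assumes "closed K" and "K \<noteq> {}"
  shows "0 \<le> FK K x"
  unfolding FK_def using compact_Theta[OF assms(1)] Theta_nonempty[OF assms] by (rule enc_radius_nonneg)

lemma dist_centerK_le_FK:
  fixes K :: "'a::euclidean_space set"
  assumes "closed K" and "K \<noteq> {}" and "\<theta> \<in> Theta K x"
  shows "dist (centerK K x) \<theta> \<le> FK K x"
  using compact_subset_enc_ball[OF compact_Theta[OF assms(1)] Theta_nonempty[OF assms(1,2)], of x]
    assms(3)
  unfolding FK_def centerK_def by auto

lemma FK_sq:
  fixes K :: "'a::euclidean_space set"
  assumes "closed K" and "K \<noteq> {}"
  shows "(FK K x)\<^sup>2 = (distK K x)\<^sup>2 - (norm (x - centerK K x))\<^sup>2"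
  unfolding FK_def centerK_def
  by (rule enc_radius_sphere[OF compact_Theta[OF assms(1)] Theta_nonempty[OF assms]]) (simp add: Theta_def)

lemma norm_sq_le_inner_centerK:
  fixes K :: "'a::euclidean_space set"
  assumes "closed K" and "K \<noteq> {}" and "\<theta> \<in> Theta K x"
  shows "(norm (x - centerK K x))\<^sup>2 \<le> (x - centerK K x) \<bullet> (x - \<theta>)"
proof -
  define c where "c = centerK K x"
  have "(norm (\<theta> - c))\<^sup>2 \<le> (FK K x)\<^sup>2"
    using dist_centerK_le_FK[OF assms] by (simp add: c_def dist_norm norm_minus_commute power_mono)
  moreover have "(distK K x)\<^sup>2 = (norm ((x - c) - (\<theta> - c)))\<^sup>2"
    using assms(3) unfolding Theta_def by (simp add: dist_norm)
  ultimately have "(x - c) \<bullet> (\<theta> - c) \<le> 0"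
    using FK_sq[OF assms(1,2), of x] power2_norm_diff[of "x - c" "\<theta> - c"] by (simp add: c_def)
  moreover have "(x - c) \<bullet> (x - \<theta>) = (norm (x - c))\<^sup>2 - (x - c) \<bullet> (\<theta> - c)"
    by (simp add: power2_norm_eq_inner inner_diff_right)
  ultimately show ?thesis
    by (simp add: c_def)
qed

text \<open>Add the squares of \<open>\<parallel>x - \<theta>x\<parallel> \<le> \<parallel>x - \<theta>y\<parallel>\<close> and \<open>\<parallel>y - \<theta>y\<parallel> \<le> \<parallel>y - \<theta>x\<parallel>\<close>.\<close>

lemma Theta_monotone:
  fixes K :: "'a::euclidean_space set"
  assumes "\<theta>x \<in> Theta K x" and "\<theta>y \<in> Theta K y"
  shows "0 \<le> (\<theta>x - \<theta>y) \<bullet> (x - y)"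
proof -
  have "dist x \<theta>x \<le> dist x \<theta>y" "dist y \<theta>y \<le> dist y \<theta>x"
    using assms infdist_le[of \<theta>y K x] infdist_le[of \<theta>x K y] unfolding Theta_def distK_def by auto
  then have "(norm (x - \<theta>x))\<^sup>2 \<le> (norm (x - \<theta>y))\<^sup>2" "(norm (y - \<theta>y))\<^sup>2 \<le> (norm (y - \<theta>x))\<^sup>2"
    by (simp_all add: dist_norm power_mono)
  then show ?thesis
    by (simp add: power2_norm_diff inner_diff_left inner_diff_right inner_commute)
qed

text \<open>The monotonicity of nearest points passes to the centers, which lie in their convex hulls.\<close>

lemma centerK_monotone:
  fixes K :: "'a::euclidean_space set"
  assumes "closed K" and "K \<noteq> {}"
  shows "0 \<le> (centerK K x - centerK K y) \<bullet> (x - y)"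
proof -
  have hull: "centerK K p \<in> convex hull (Theta K p)" for p
    unfolding centerK_def using compact_Theta[OF assms(1)] Theta_nonempty[OF assms]
    by (rule enc_center_in_convex_hull)
  define Hy where "Hy = (\<Inter>\<theta>x\<in>Theta K x. {p. (x - y) \<bullet> p \<le> (x - y) \<bullet> \<theta>x})"
  have "Theta K y \<subseteq> Hy"
    unfolding Hy_def using Theta_monotone[of _ K x _ y] by (force simp: inner_diff_left inner_commute)
  then have "centerK K y \<in> Hy"
    using hull[of y] hull_minimal[of "Theta K y" Hy convex] unfolding Hy_def
    by (auto intro: convex_INT convex_halfspace_le)
  define Hx where "Hx = {p. (x - y) \<bullet> centerK K y \<le> (x - y) \<bullet> p}"
  have "Theta K x \<subseteq> Hx"
    using \<open>centerK K y \<in> Hy\<close> unfolding Hx_def Hy_def by auto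
  then have "centerK K x \<in> Hx"
    using hull[of x] hull_minimal[of "Theta K x" Hx convex] unfolding Hx_def
    by (auto intro: convex_halfspace_ge)
  then show ?thesis
    unfolding Hx_def by (simp add: inner_diff_left inner_diff_right inner_commute)
qed

text \<open>Nearest points of \<open>z\<close> are within \<open>R + 2 dist z x\<close> of \<open>x\<close>, while by compactness the points
  of \<open>K\<close> that are \<open>\<epsilon>\<close>-far from \<open>Theta K x\<close> are at least \<open>R + \<eta>\<close> away from \<open>x\<close>.\<close>

lemma Theta_upper_hemicontinuous:
  fixes K :: "'a::euclidean_space set"
  assumes "closed K" and "K \<noteq> {}" and "0 < \<epsilon>"
  shows "\<forall>\<^sub>F z in nhds x. \<forall>\<theta>\<in>Theta K z. \<exists>\<theta>'\<in>Theta K x. dist \<theta> \<theta>' < \<epsilon>"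
proof -
  define R where "R = distK K x"
  define C where "C = K \<inter> cball x (R + 1) \<inter> {\<theta>. \<epsilon> \<le> infdist \<theta> (Theta K x)}"
  have "compact C"
    unfolding C_def using assms(1)
    by (intro compact_Int_closed closed_Int_compact compact_cball closed_Collect_le continuous_intros)
  have "\<exists>\<eta>>0. \<forall>\<theta>\<in>C. R + \<eta> \<le> dist x \<theta>"
  proof (cases "C = {}")
    case False
    have "continuous_on C (dist x)"
      by (intro continuous_intros)
    then obtain \<theta>0 where "\<theta>0 \<in> C" and \<theta>0_min: "\<forall>\<theta>\<in>C. dist x \<theta>0 \<le> dist x \<theta>"
      using continuous_attains_inf[OF \<open>compact C\<close> False] by blast
    have "\<theta>0 \<notin> Theta K x"
      using \<open>\<theta>0 \<in> C\<close> assms(3) unfolding C_def by (auto simp: infdist_zero)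
    moreover have "R \<le> dist x \<theta>0"
      using \<open>\<theta>0 \<in> C\<close> infdist_le[of \<theta>0 K x] unfolding C_def R_def distK_def by auto
    ultimately have "R < dist x \<theta>0"
      using \<open>\<theta>0 \<in> C\<close> unfolding C_def Theta_def R_def by auto
    then show ?thesis
      using \<theta>0_min by (intro exI[of _ "dist x \<theta>0 - R"]) auto
  qed (auto intro: exI[of _ 1])
  then obtain \<eta> where "0 < \<eta>" and \<eta>: "\<And>\<theta>. \<theta> \<in> C \<Longrightarrow> R + \<eta> \<le> dist x \<theta>"
    by blast
  have "\<forall>\<^sub>F z in nhds x. dist z x < min 1 \<eta> / 2"
    using \<open>0 < \<eta>\<close> by (auto simp: eventually_nhds_metric intro: exI[of _ "min 1 \<eta> / 2"])
  then show ?thesis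
  proof (rule eventually_mono, intro ballI)
    fix z \<theta> assume "dist z x < min 1 \<eta> / 2" and "\<theta> \<in> Theta K z"
    then have "dist x \<theta> < R + min 1 \<eta>"
      using dist_Theta_le[of \<theta> K z x] unfolding R_def by linarith
    then have "infdist \<theta> (Theta K x) < \<epsilon>"
      using \<eta>[of \<theta>] \<open>\<theta> \<in> Theta K z\<close> unfolding C_def Theta_def by force
    moreover obtain \<theta>' where "\<theta>' \<in> Theta K x" and "infdist \<theta> (Theta K x) = dist \<theta> \<theta>'"
      using infdist_attains_inf[OF compact_imp_closed[OF compact_Theta[OF assms(1)]]
          Theta_nonempty[OF assms(1,2)]]
      by blast
    ultimately show "\<exists>\<theta>'\<in>Theta K x. dist \<theta> \<theta>' < \<epsilon>"
      by auto
  qed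
qed

lemma FK_upper_semicontinuous:
  fixes K :: "'a::euclidean_space set"
  assumes "closed K" and "K \<noteq> {}" and "0 < \<epsilon>"
  shows "\<forall>\<^sub>F z in nhds x. FK K z \<le> FK K x + \<epsilon>"
  using Theta_upper_hemicontinuous[OF assms, of x]
proof (rule eventually_mono)
  fix z assume near: "\<forall>\<theta>\<in>Theta K z. \<exists>\<theta>'\<in>Theta K x. dist \<theta> \<theta>' < \<epsilon>"
  have "Theta K z \<subseteq> cball (centerK K x) (FK K x + \<epsilon>)"
  proof
    fix \<theta> assume "\<theta> \<in> Theta K z"
    then obtain \<theta>' where "\<theta>' \<in> Theta K x" and "dist \<theta> \<theta>' < \<epsilon>"
      using near by blast
    then show "\<theta> \<in> cball (centerK K x) (FK K x + \<epsilon>)"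
      using dist_centerK_le_FK[OF assms(1,2)] dist_triangle[of "centerK K x" \<theta> \<theta>']
      by (fastforce simp: dist_commute)
  qed
  then show "FK K z \<le> FK K x + \<epsilon>"
    unfolding FK_def using Theta_nonempty[OF assms(1,2)] by (rule enc_radius_le[rotated])
qed

section \<open>Lower right Dini derivatives\<close>

definition right_dini_ge :: "(real \<Rightarrow> real) \<Rightarrow> real \<Rightarrow> real \<Rightarrow> bool" where
  "right_dini_ge \<phi> s A \<longleftrightarrow> (\<forall>\<epsilon>>0. \<forall>\<^sub>F h in at_right 0. \<phi> s + (A - \<epsilon>) * h \<le> \<phi> (s + h))"

definition left_usc :: "(real \<Rightarrow> real) \<Rightarrow> real \<Rightarrow> bool" where
  "left_usc \<phi> s \<longleftrightarrow> (\<forall>\<epsilon>>0. \<forall>\<^sub>F r in at_left s. \<phi> r \<le> \<phi> s + \<epsilon>)"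

lemma right_dini_geD:
  assumes "right_dini_ge \<phi> s A" and "0 < \<epsilon>"
  shows "\<forall>\<^sub>F h in at_right 0. \<phi> s + (A - \<epsilon>) * h \<le> \<phi> (s + h)"
  using assms unfolding right_dini_ge_def by blast

lemma right_dini_ge_mono:
  assumes "right_dini_ge \<phi> s A" and "B \<le> A"
  shows "right_dini_ge \<phi> s B"
  unfolding right_dini_ge_def
proof (intro allI impI)
  fix \<epsilon> :: real assume "0 < \<epsilon>"
  show "\<forall>\<^sub>F h in at_right 0. \<phi> s + (B - \<epsilon>) * h \<le> \<phi> (s + h)"
    using right_dini_geD[OF assms(1) \<open>0 < \<epsilon>\<close>] eventually_at_right_less[of 0]
  proof eventually_elim
    case (elim h)
    then have "(B - \<epsilon>) * h \<le> (A - \<epsilon>) * h"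
      using assms(2) by (intro mult_right_mono) auto
    then show ?case
      using elim by linarith
  qed
qed

lemma right_dini_ge_approx:
  assumes "\<And>B. B < A \<Longrightarrow> right_dini_ge \<phi> s B"
  shows "right_dini_ge \<phi> s A"
  unfolding right_dini_ge_def
proof (intro allI impI)
  fix \<epsilon> :: real assume "0 < \<epsilon>"
  then have "right_dini_ge \<phi> s (A - \<epsilon> / 2)"
    by (intro assms) simp
  from right_dini_geD[OF this, of "\<epsilon> / 2"] \<open>0 < \<epsilon>\<close>
  show "\<forall>\<^sub>F h in at_right 0. \<phi> s + (A - \<epsilon>) * h \<le> \<phi> (s + h)"
    by simp
qed

lemma right_dini_ge_add:
  assumes "right_dini_ge f s A" and "right_dini_ge g s B"
  shows "right_dini_ge (\<lambda>u. f u + g u) s (A + B)"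
  unfolding right_dini_ge_def
proof (intro allI impI)
  fix \<epsilon> :: real assume "0 < \<epsilon>"
  then have "\<epsilon> / 2 > 0"
    by simp
  with right_dini_geD[OF assms(1)] right_dini_geD[OF assms(2)]
  have "\<forall>\<^sub>F h in at_right 0. f s + (A - \<epsilon> / 2) * h \<le> f (s + h)"
    "\<forall>\<^sub>F h in at_right 0. g s + (B - \<epsilon> / 2) * h \<le> g (s + h)"
    by auto
  then show "\<forall>\<^sub>F h in at_right 0. f s + g s + (A + B - \<epsilon>) * h \<le> f (s + h) + g (s + h)"
  proof (eventually_elim)
    case (elim h)
    then show ?case
      by (simp add: algebra_simps)
  qed
qed

lemma has_real_derivative_imp_right_dini_ge:
  assumes "(\<phi> has_real_derivative D) (at s within {s..})"
  shows "right_dini_ge \<phi> s D"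
  unfolding right_dini_ge_def
proof (intro allI impI)
  fix \<epsilon> :: real assume "0 < \<epsilon>"
  have "((\<lambda>y. (\<phi> y - \<phi> s) / (y - s)) \<longlongrightarrow> D) (at_right s)"
    using assms by (simp add: has_field_derivative_iff at_within_Ici_at_right)
  then have "((\<lambda>h. (\<phi> (s + h) - \<phi> s) / h) \<longlongrightarrow> D) (at_right 0)"
    by (simp add: filterlim_at_right_to_0[of _ _ s] add.commute)
  moreover have "D - \<epsilon> < D"
    using \<open>0 < \<epsilon>\<close> by simp
  ultimately have "\<forall>\<^sub>F h in at_right 0. D - \<epsilon> < (\<phi> (s + h) - \<phi> s) / h"
    by (rule order_tendstoD(1))
  with eventually_at_right_less[of 0]
  show "\<forall>\<^sub>F h in at_right 0. \<phi> s + (D - \<epsilon>) * h \<le> \<phi> (s + h)"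
    by eventually_elim (simp add: pos_less_divide_eq)
qed

lemma right_dini_ge_minorant:
  assumes "\<forall>\<^sub>F h in at_right 0. \<psi> h \<le> \<phi> (s + h)"
    and "(\<psi> has_real_derivative D) (at 0 within {0..})" and "\<psi> 0 = \<phi> s"
  shows "right_dini_ge \<phi> s D"
  unfolding right_dini_ge_def
proof (intro allI impI)
  fix \<epsilon> :: real assume "0 < \<epsilon>"
  show "\<forall>\<^sub>F h in at_right 0. \<phi> s + (D - \<epsilon>) * h \<le> \<phi> (s + h)"
    using right_dini_geD[OF has_real_derivative_imp_right_dini_ge[OF assms(2)] \<open>0 < \<epsilon>\<close>] assms(1)
    by eventually_elim (use assms(3) in simp)
qed

lemma right_dini_ge_chain:
  assumes f: "right_dini_ge f s A" and k: "mono_on {c..} k" and "c < f s"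
    and k': "(k has_real_derivative D) (at (f s))" and "0 \<le> D"
  shows "right_dini_ge (\<lambda>u. k (f u)) s (D * A)"
proof (rule right_dini_ge_approx)
  fix B assume "B < D * A"
  define \<delta> where "\<delta> = (D * A - B) / (D + 1)"
  have "0 < \<delta>"
    using \<open>B < D * A\<close> \<open>0 \<le> D\<close> by (simp add: \<delta>_def)
  have "D * \<delta> \<le> D * A - B"
    using \<open>B < D * A\<close> \<open>0 \<le> D\<close> by (simp add: \<delta>_def field_simps)
  then have "B \<le> D * (A - \<delta>)"
    by (simp add: algebra_simps)
  define \<psi> where "\<psi> h = k (f s + (A - \<delta>) * h)" for h
  have "((\<lambda>h. f s + (A - \<delta>) * h) \<longlongrightarrow> f s) (at_right 0)"
    by (auto intro!: tendsto_eq_intros)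
  from right_dini_geD[OF f \<open>0 < \<delta>\<close>] order_tendstoD(1)[OF this \<open>c < f s\<close>]
  have "\<forall>\<^sub>F h in at_right 0. \<psi> h \<le> k (f (s + h))"
    by eventually_elim (auto simp: \<psi>_def intro!: mono_onD[OF k])
  moreover have "(\<psi> has_real_derivative D * (A - \<delta>)) (at 0 within {0..})"
  proof -
    have "((\<lambda>h. f s + (A - \<delta>) * h) has_real_derivative A - \<delta>) (at 0 within {0..})"
      by (auto intro!: derivative_eq_intros)
    moreover have "(k has_real_derivative D) (at (f s + (A - \<delta>) * 0))"
      using k' by simp
    ultimately show ?thesis
      unfolding \<psi>_def by (rule DERIV_chain2[rotated])
  qed
  ultimately have "right_dini_ge (\<lambda>u. k (f u)) s (D * (A - \<delta>))"
    by (rule right_dini_ge_minorant[where \<phi> = "\<lambda>u. k (f u)"]) (simp add: \<psi>_def)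
  then show "right_dini_ge (\<lambda>u. k (f u)) s B"
    using \<open>B \<le> D * (A - \<delta>)\<close> by (rule right_dini_ge_mono)
qed

lemma has_vector_derivative_right_approx:
  fixes \<gamma> :: "real \<Rightarrow> 'a::real_normed_vector"
  assumes "(\<gamma> has_vector_derivative v) (at s within {s..})" and "0 < \<epsilon>"
  shows "\<forall>\<^sub>F h in at_right 0. norm (\<gamma> (s + h) - \<gamma> s - h *\<^sub>R v) \<le> \<epsilon> * h"
proof -
  obtain d where "0 < d"
    and d: "\<forall>y\<in>{s..}. norm (y - s) < d \<longrightarrow> norm (\<gamma> y - \<gamma> s - (y - s) *\<^sub>R v) \<le> \<epsilon> * norm (y - s)"
    using assms unfolding has_vector_derivative_def has_derivative_within_alt by blast
  show ?thesis
    unfolding eventually_at_right_field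
  proof (intro exI[of _ d] conjI allI impI)
    fix h :: real assume "0 < h" "h < d"
    then show "norm (\<gamma> (s + h) - \<gamma> s - h *\<^sub>R v) \<le> \<epsilon> * h"
      using d[rule_format, of "s + h"] by simp
  qed (fact \<open>0 < d\<close>)
qed

lemma right_dini_ge_neg_norm:
  fixes \<gamma> :: "real \<Rightarrow> 'a::real_normed_vector"
  assumes "(\<gamma> has_vector_derivative v) (at s within {s..})"
  shows "right_dini_ge (\<lambda>u. - norm (\<gamma> u - p)) s (- norm v)"
  unfolding right_dini_ge_def
proof (intro allI impI)
  fix \<epsilon> :: real assume "0 < \<epsilon>"
  from has_vector_derivative_right_approx[OF assms this] eventually_at_right_less[of 0]
  show "\<forall>\<^sub>F h in at_right 0. - norm (\<gamma> s - p) + (- norm v - \<epsilon>) * h \<le> - norm (\<gamma> (s + h) - p)"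
  proof eventually_elim
    case (elim h)
    have "norm (\<gamma> (s + h) - p) \<le> norm (\<gamma> s - p) + norm (h *\<^sub>R v) + norm (\<gamma> (s + h) - \<gamma> s - h *\<^sub>R v)"
      using norm_triangle_ineq[of "\<gamma> s - p" "h *\<^sub>R v"]
        norm_triangle_ineq[of "\<gamma> s - p + h *\<^sub>R v" "\<gamma> (s + h) - \<gamma> s - h *\<^sub>R v"]
      by (simp add: algebra_simps)
    then show ?case
      using elim by (simp add: algebra_simps)
  qed
qed

lemma continuous_on_imp_left_usc:
  assumes "continuous_on {a..b} \<phi>" and "a < s" and "s \<le> b"
  shows "left_usc \<phi> s"
  unfolding left_usc_def
proof (intro allI impI)
  fix \<epsilon> :: real assume "0 < \<epsilon>"
  then obtain d where "0 < d" and d: "\<forall>r\<in>{a..b}. dist r s < d \<longrightarrow> dist (\<phi> r) (\<phi> s) < \<epsilon>"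
    using assms unfolding continuous_on_iff by (meson atLeastAtMost_iff less_imp_le)
  show "\<forall>\<^sub>F r in at_left s. \<phi> r \<le> \<phi> s + \<epsilon>"
    unfolding eventually_at_left_field
  proof (intro exI[of _ "s - min d (s - a)"] conjI allI impI)
    fix r assume "s - min d (s - a) < r" and "r < s"
    then have "a < r" "s - r < d"
      using min.cobounded1[of d "s - a"] min.cobounded2[of d "s - a"] by linarith+
    then show "\<phi> r \<le> \<phi> s + \<epsilon>"
      using d[rule_format, of r] \<open>r < s\<close> assms(3) by (auto simp: dist_real_def)
  qed (use \<open>0 < d\<close> assms(2) in auto)
qed

text \<open>Follow the last point up to which \<open>\<psi>\<close> stays above its initial value.\<close>

lemma right_dini_pos_imp_le:
  fixes \<psi> :: "real \<Rightarrow> real"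
  assumes "a \<le> b" and "0 < e"
    and dini: "\<And>s. a \<le> s \<Longrightarrow> s < b \<Longrightarrow> right_dini_ge \<psi> s e"
    and usc: "\<And>s. a < s \<Longrightarrow> s \<le> b \<Longrightarrow> left_usc \<psi> s"
  shows "\<psi> a \<le> \<psi> b"
proof -
  define S where "S = {s \<in> {a..b}. \<psi> a \<le> \<psi> s}"
  define t where "t = Sup S"
  have "a \<in> S"
    using assms(1) by (simp add: S_def)
  have "bdd_above S"
    unfolding S_def by (auto intro: bdd_aboveI[of _ b])
  have "a \<le> t" "t \<le> b"
    using \<open>a \<in> S\<close> \<open>bdd_above S\<close> unfolding t_def by (auto intro: cSup_upper cSup_least simp: S_def)
  have "\<psi> a \<le> \<psi> t"
  proof (cases "t \<in> S")
    case False
    with \<open>a \<in> S\<close> \<open>a \<le> t\<close> have "a < t"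
      by (cases "a = t") auto
    show ?thesis
    proof (rule field_le_epsilon)
      fix \<epsilon> :: real assume "0 < \<epsilon>"
      with usc[OF \<open>a < t\<close> \<open>t \<le> b\<close>]
      obtain b0 where "b0 < t" and b0: "\<And>r. b0 < r \<Longrightarrow> r < t \<Longrightarrow> \<psi> r \<le> \<psi> t + \<epsilon>"
        unfolding left_usc_def eventually_at_left_field by blast
      obtain r where "r \<in> S" and "b0 < r"
        using less_cSupD[of S b0] \<open>a \<in> S\<close> \<open>b0 < t\<close> unfolding t_def by blast
      moreover have "r < t"
        using \<open>r \<in> S\<close> False cSup_upper[OF _ \<open>bdd_above S\<close>] unfolding t_def by (metis order_le_less)
      ultimately show "\<psi> a \<le> \<psi> t + \<epsilon>"
        using b0[of r] unfolding S_def by auto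
    qed
  qed (simp add: S_def)
  have "t = b"
  proof (rule ccontr)
    assume "t \<noteq> b"
    with \<open>t \<le> b\<close> have "t < b"
      by simp
    from right_dini_geD[OF dini[OF \<open>a \<le> t\<close> this] \<open>0 < e\<close>]
    obtain c where "0 < c" and c: "\<And>h. 0 < h \<Longrightarrow> h < c \<Longrightarrow> \<psi> t \<le> \<psi> (t + h)"
      unfolding eventually_at_right_field by auto
    define h where "h = min c (b - t) / 2"
    have "0 < h" "h < c" "t + h \<le> b"
      using \<open>0 < c\<close> \<open>t < b\<close> by (auto simp: h_def min_def field_simps)
    then have "t + h \<in> S"
      using c[of h] \<open>\<psi> a \<le> \<psi> t\<close> \<open>a \<le> t\<close> by (simp add: S_def)
    then show False
      using cSup_upper[OF _ \<open>bdd_above S\<close>] \<open>0 < h\<close> unfolding t_def by fastforce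
  qed
  with \<open>\<psi> a \<le> \<psi> t\<close> show ?thesis
    by simp
qed

lemma right_dini_nonneg_imp_le:
  fixes \<phi> :: "real \<Rightarrow> real"
  assumes "a \<le> b"
    and dini: "\<And>s. a \<le> s \<Longrightarrow> s < b \<Longrightarrow> right_dini_ge \<phi> s 0"
    and usc: "\<And>s. a < s \<Longrightarrow> s \<le> b \<Longrightarrow> left_usc \<phi> s"
  shows "\<phi> a \<le> \<phi> b"
proof -
  have "\<phi> a \<le> \<phi> b + e * (b - a)" if "0 < e" for e
  proof -
    define \<psi> where "\<psi> u = \<phi> u + e * (u - a)" for u
    have "\<psi> a \<le> \<psi> b"
    proof (rule right_dini_pos_imp_le[OF assms(1) that])
      fix s assume "a \<le> s" "s < b"
      have "((\<lambda>u. e * (u - a)) has_real_derivative e) (at s within {s..})"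
        by (auto intro!: derivative_eq_intros)
      from right_dini_ge_add[OF dini[OF \<open>a \<le> s\<close> \<open>s < b\<close>] has_real_derivative_imp_right_dini_ge[OF this]]
      show "right_dini_ge \<psi> s e"
        by (simp add: \<psi>_def[abs_def])
    next
      fix s assume "a < s" "s \<le> b"
      show "left_usc \<psi> s"
        unfolding left_usc_def
      proof (intro allI impI)
        fix \<epsilon> :: real assume "0 < \<epsilon>"
        have "\<forall>\<^sub>F r in at_left s. r < s"
          by (auto simp: eventually_at_left_field intro: exI[of _ "s - 1"])
        with usc[OF \<open>a < s\<close> \<open>s \<le> b\<close>, unfolded left_usc_def, rule_format, OF \<open>0 < \<epsilon>\<close>]
        show "\<forall>\<^sub>F r in at_left s. \<psi> r \<le> \<psi> s + \<epsilon>"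
        proof eventually_elim
          case (elim r)
          moreover have "e * (r - a) \<le> e * (s - a)"
            using \<open>0 < e\<close> elim by (intro mult_left_mono) auto
          ultimately show ?case
            by (simp add: \<psi>_def)
        qed
      qed
    qed
    then show ?thesis
      by (simp add: \<psi>_def)
  qed
  show ?thesis
  proof (cases "a = b")
    case False
    with assms(1) have "0 < b - a"
      by simp
    show ?thesis
    proof (rule field_le_epsilon)
      fix \<epsilon> :: real assume "0 < \<epsilon>"
      then show "\<phi> a \<le> \<phi> b + \<epsilon>"
        using \<open>\<And>e. 0 < e \<Longrightarrow> \<phi> a \<le> \<phi> b + e * (b - a)\<close>[of "\<epsilon> / (b - a)"] \<open>0 < b - a\<close> by simp
    qed
  qed simp
qed

lemma distK_sq_ge_first_order:
  fixes K :: "'a::euclidean_space set"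
  assumes "\<theta> \<in> Theta K z" and "dist \<theta> \<theta>' \<le> e1" and "m \<le> v \<bullet> (x - \<theta>')"
    and "norm (z - x - h *\<^sub>R v) \<le> e2 * h" and "dist z x \<le> 1" and "0 \<le> h"
  shows "(distK K x)\<^sup>2 + 2 * h * (m - norm v * e1 - e2 * (distK K x + 2)) \<le> (distK K z)\<^sup>2"
proof -
  define R where "R = distK K x"
  have "\<bar>v \<bullet> (\<theta>' - \<theta>)\<bar> \<le> norm v * e1"
    using Cauchy_Schwarz_ineq2[of v "\<theta>' - \<theta>"] assms(2)
    by (smt (verit, best) dist_norm mult_left_mono norm_ge_zero norm_minus_commute)
  moreover have "v \<bullet> (x - \<theta>) = v \<bullet> (x - \<theta>') + v \<bullet> (\<theta>' - \<theta>)"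
    by (simp add: inner_diff_right)
  ultimately have "m - norm v * e1 \<le> v \<bullet> (x - \<theta>)"
    using assms(3) by linarith
  then have "h * (m - norm v * e1) \<le> h * (v \<bullet> (x - \<theta>))"
    using assms(6) by (rule mult_left_mono)
  have "norm (x - \<theta>) \<le> R + 2"
    using dist_Theta_le[OF assms(1), of x] assms(5) by (simp add: R_def dist_norm)
  then have "\<bar>(z - x - h *\<^sub>R v) \<bullet> (x - \<theta>)\<bar> \<le> e2 * h * (R + 2)"
    using Cauchy_Schwarz_ineq2[of "z - x - h *\<^sub>R v" "x - \<theta>"] assms(4)
    by (smt (verit, best) mult_mono norm_ge_zero)
  moreover have "(z - x) \<bullet> (x - \<theta>) = h * (v \<bullet> (x - \<theta>)) + (z - x - h *\<^sub>R v) \<bullet> (x - \<theta>)"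
    by (simp add: inner_diff_left)
  moreover have "h * (m - norm v * e1 - e2 * (R + 2)) = h * (m - norm v * e1) - e2 * h * (R + 2)"
    by (simp add: algebra_simps)
  ultimately have "h * (m - norm v * e1 - e2 * (R + 2)) \<le> (z - x) \<bullet> (x - \<theta>)"
    using \<open>h * (m - norm v * e1) \<le> h * (v \<bullet> (x - \<theta>))\<close> by linarith
  then show ?thesis
    using distK_sq_ge[OF assms(1), of x] by (simp add: R_def)
qed

lemma right_dini_distK_sq:
  fixes K :: "'a::euclidean_space set" and \<gamma> :: "real \<Rightarrow> 'a"
  assumes "closed K" and "K \<noteq> {}"
    and \<gamma>': "(\<gamma> has_vector_derivative v) (at s within {s..})"
    and m: "\<And>\<theta>. \<theta> \<in> Theta K (\<gamma> s) \<Longrightarrow> m \<le> v \<bullet> (\<gamma> s - \<theta>)"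
  shows "right_dini_ge (\<lambda>u. (distK K (\<gamma> u))\<^sup>2) s (2 * m)"
  unfolding right_dini_ge_def
proof (intro allI impI)
  fix \<epsilon> :: real assume "0 < \<epsilon>"
  define x where "x = \<gamma> s"
  define R where "R = distK K x"
  define \<epsilon>1 where "\<epsilon>1 = \<epsilon> / (4 * (norm v + 1))"
  define \<epsilon>2 where "\<epsilon>2 = \<epsilon> / (4 * (R + 2))"
  have "0 \<le> R"
    by (simp add: R_def distK_def infdist_nonneg)
  have "0 < norm v + 1"
    by (simp add: add_nonneg_pos)
  then have "0 < \<epsilon>1"
    using \<open>0 < \<epsilon>\<close> by (simp add: \<epsilon>1_def)
  have "norm v * \<epsilon>1 = \<epsilon> / 4 * (norm v / (norm v + 1))"
    using \<open>0 < norm v + 1\<close> by (simp add: \<epsilon>1_def field_simps)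
  also have "\<dots> \<le> \<epsilon> / 4"
    using \<open>0 < \<epsilon>\<close> \<open>0 < norm v + 1\<close> by (intro mult_left_le) auto
  finally have "norm v * \<epsilon>1 \<le> \<epsilon> / 4" .
  have "0 < \<epsilon>2" "\<epsilon>2 * (R + 2) = \<epsilon> / 4"
    using \<open>0 < \<epsilon>\<close> \<open>0 \<le> R\<close> by (auto simp: \<epsilon>2_def field_simps)
  have lim: "((\<lambda>h. \<gamma> (s + h)) \<longlongrightarrow> x) (at_right 0)"
    using has_vector_derivative_continuous[OF \<gamma>']
    by (simp add: continuous_within at_within_Ici_at_right filterlim_at_right_to_0[of _ _ s]
        add.commute x_def)
  have near: "\<forall>\<^sub>F h in at_right 0. \<forall>\<theta>\<in>Theta K (\<gamma> (s + h)). \<exists>\<theta>'\<in>Theta K x. dist \<theta> \<theta>' < \<epsilon>1"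
    using Theta_upper_hemicontinuous[OF assms(1,2) \<open>0 < \<epsilon>1\<close>] lim by (rule eventually_compose_filterlim)
  have close: "\<forall>\<^sub>F h in at_right 0. dist (\<gamma> (s + h)) x < 1"
    using lim by (rule tendstoD) simp
  show "\<forall>\<^sub>F h in at_right 0. (distK K (\<gamma> s))\<^sup>2 + (2 * m - \<epsilon>) * h \<le> (distK K (\<gamma> (s + h)))\<^sup>2"
    using near close has_vector_derivative_right_approx[OF \<gamma>' \<open>0 < \<epsilon>2\<close>] eventually_at_right_less[of 0]
  proof eventually_elim
    case (elim h)
    obtain \<theta> where \<theta>: "\<theta> \<in> Theta K (\<gamma> (s + h))"
      using Theta_nonempty[OF assms(1,2)] by blast
    then obtain \<theta>' where "\<theta>' \<in> Theta K x" and "dist \<theta> \<theta>' < \<epsilon>1"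
      using elim(1) by blast
    have "(2 * m - \<epsilon>) * h \<le> 2 * h * (m - norm v * \<epsilon>1 - \<epsilon>2 * (R + 2))"
      using \<open>norm v * \<epsilon>1 \<le> \<epsilon> / 4\<close> \<open>\<epsilon>2 * (R + 2) = \<epsilon> / 4\<close> elim(4) by (simp add: mult_left_mono)
    also have "(distK K x)\<^sup>2 + \<dots> \<le> (distK K (\<gamma> (s + h)))\<^sup>2"
      unfolding R_def using \<theta> \<open>dist \<theta> \<theta>' < \<epsilon>1\<close> m[of \<theta>'] \<open>\<theta>' \<in> Theta K x\<close> elim(2-4)
      by (intro distK_sq_ge_first_order) (auto simp: x_def)
    finally show ?case
      by (simp add: x_def)
  qed
qed

lemma has_real_derivative_norm_sq:
  fixes f :: "real \<Rightarrow> 'a::real_inner"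
  assumes "(f has_vector_derivative d) (at u within S)"
  shows "((\<lambda>u. (norm (f u))\<^sup>2) has_real_derivative 2 * (f u \<bullet> d)) (at u within S)"
proof -
  have f': "(f has_derivative (\<lambda>h. h *\<^sub>R d)) (at u within S)"
    using assms by (simp add: has_vector_derivative_def)
  have "((\<lambda>u. f u \<bullet> f u) has_derivative (\<lambda>h. f u \<bullet> (h *\<^sub>R d) + (h *\<^sub>R d) \<bullet> f u)) (at u within S)"
    by (rule has_derivative_inner[OF f' f'])
  moreover have "(\<lambda>h. f u \<bullet> (h *\<^sub>R d) + (h *\<^sub>R d) \<bullet> f u) = (*) (2 * (f u \<bullet> d))"
    by (auto simp: fun_eq_iff inner_commute algebra_simps)
  ultimately show ?thesis
    by (simp add: has_field_derivative_def power2_norm_eq_inner)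
qed

lemma has_vector_derivative_shift_right:
  fixes f :: "real \<Rightarrow> 'a::real_normed_vector"
  assumes "(f has_vector_derivative d) (at (u + \<delta>) within {u + \<delta>..})"
  shows "((\<lambda>u. f (u + \<delta>)) has_vector_derivative d) (at u within {u..})"
proof -
  have "(f has_vector_derivative d) (at (u + \<delta>) within (\<lambda>u. u + \<delta>) ` {u..})"
    using assms by (rule has_vector_derivative_within_subset) auto
  moreover have "((\<lambda>u. u + \<delta>) has_real_derivative 1) (at u within {u..})"
    by (auto intro!: derivative_eq_intros)
  ultimately show ?thesis
    using vector_diff_chain_within[of "\<lambda>u. u + \<delta>" 1 u "{u..}" f d]
    by (simp add: o_def has_real_derivative_iff_has_vector_derivative)
qed

lemma offset_ratio_mono:
  fixes \<alpha> l R1 R2 F1 F2 :: real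
  assumes "0 \<le> \<alpha>" and "\<alpha> < R1" and "R1 \<le> R2" and "0 \<le> F1" and "F1 \<le> F2"
    and "(R2 - \<alpha>) * F2 \<le> l * R2"
  shows "(R1 - \<alpha>) * F1 \<le> l * R1"
proof -
  have "R1 * \<alpha> \<le> R2 * \<alpha>"
    using assms(1,3) by (rule mult_right_mono[rotated])
  then have "(R1 - \<alpha>) * R2 \<le> (R2 - \<alpha>) * R1"
    by (simp add: algebra_simps)
  then have "R2 * ((R1 - \<alpha>) * F1) \<le> R1 * ((R2 - \<alpha>) * F1)"
    using assms(4) by (metis mult.commute mult.left_commute mult_right_mono)
  also have "\<dots> \<le> R1 * ((R2 - \<alpha>) * F2)"
    using assms by (intro mult_right_mono mult_left_mono) auto
  also have "\<dots> \<le> R1 * (l * R2)"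
    using assms by (intro mult_left_mono) auto
  also have "\<dots> = R2 * (l * R1)"
    by simp
  moreover have "0 < R2"
    using assms(1-3) by linarith
  ultimately show ?thesis
    by (simp add: mult_le_cancel_left_pos)
qed

text \<open>With \<open>g = \<surd>((R - \<alpha>)\<^sup>2 - l\<^sup>2)\<close>, the bound \<open>(R - \<alpha>) F \<le> l R\<close> is equivalent to
  \<open>g R \<le> (R - \<alpha>) w\<close>, i.e. to \<open>g\<close> growing at least at speed \<open>w\<close> when \<open>R\<close> grows at rate \<open>w\<^sup>2 / R\<close>.\<close>

lemma speed_le_growth_rate:
  fixes R \<alpha> l F w :: real
  assumes "0 < R" and "0 < l" and "l < R - \<alpha>" and "0 \<le> F" and "F\<^sup>2 = R\<^sup>2 - w\<^sup>2" and "0 \<le> w"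
    and "(R - \<alpha>) * F \<le> l * R"
  shows "w \<le> (R - \<alpha>) / sqrt ((R - \<alpha>)\<^sup>2 - l\<^sup>2) * (w\<^sup>2 / R)"
proof -
  define P where "P = R - \<alpha>"
  define g where "g = sqrt (P\<^sup>2 - l\<^sup>2)"
  have "l\<^sup>2 < P\<^sup>2"
    using assms(2,3) unfolding P_def by (intro power_strict_mono) auto
  then have "0 < g" and g2: "g\<^sup>2 = P\<^sup>2 - l\<^sup>2"
    unfolding g_def by auto
  have "(P * F)\<^sup>2 \<le> (l * R)\<^sup>2"
    using assms unfolding P_def by (intro power_mono) auto
  then have "P\<^sup>2 * F\<^sup>2 \<le> l\<^sup>2 * R\<^sup>2"
    by (simp add: power_mult_distrib)
  moreover have "(g * R)\<^sup>2 = P\<^sup>2 * R\<^sup>2 - l\<^sup>2 * R\<^sup>2"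
    by (simp add: g2 power_mult_distrib algebra_simps)
  moreover have "(P * w)\<^sup>2 = P\<^sup>2 * R\<^sup>2 - P\<^sup>2 * F\<^sup>2"
    by (simp add: assms(5) power_mult_distrib right_diff_distrib)
  ultimately have "(g * R)\<^sup>2 \<le> (P * w)\<^sup>2"
    by linarith
  moreover have "0 \<le> P * w"
    using assms(2,3,6) by (simp add: P_def)
  ultimately have "g * R \<le> P * w"
    by (rule power2_le_imp_le)
  then have "w * (g * R) \<le> w * (P * w)"
    using assms(6) by (rule mult_left_mono)
  moreover have "0 < g * R"
    using \<open>0 < g\<close> assms(1) by simp
  ultimately have "w \<le> (P * w\<^sup>2) / (g * R)"
    by (simp add: pos_le_divide_eq power2_eq_square mult_ac)
  then show ?thesis
    unfolding P_def[symmetric] g_def[symmetric] by simp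
qed

section \<open>The center flow\<close>

locale center_flow =
  fixes K :: "'a::euclidean_space set" and z :: "real \<Rightarrow> 'a"
  assumes closed: "closed K" and nonempty: "K \<noteq> {}"
    and outside: "\<And>u. 0 \<le> u \<Longrightarrow> z u \<notin> K"
    and continuous: "continuous_on {0..} z"
    and derivative: "\<And>u. 0 \<le> u \<Longrightarrow> (z has_vector_derivative z u - centerK K (z u)) (at u within {u..})"
begin

lemma continuous_on_interval: "0 \<le> a \<Longrightarrow> continuous_on {a..b} z"
  using continuous by (rule continuous_on_subset) auto

lemma tendsto_at_left: "0 < s \<Longrightarrow> (z \<longlongrightarrow> z s) (at_left s)"
  using continuous_on_interior[OF continuous, of s]
  by (auto simp: isCont_def intro: tendsto_mono[OF at_le])

lemma right_dini_distK_sq_speed: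
  assumes "0 \<le> s"
  shows "right_dini_ge (\<lambda>u. (distK K (z u))\<^sup>2) s (2 * (norm (z s - centerK K (z s)))\<^sup>2)"
  by (rule right_dini_distK_sq[OF closed nonempty derivative[OF assms]])
    (rule norm_sq_le_inner_centerK[OF closed nonempty])

lemma distK_mono:
  assumes "0 \<le> u1" and "u1 \<le> u2"
  shows "distK K (z u1) \<le> distK K (z u2)"
proof -
  have "(distK K (z u1))\<^sup>2 \<le> (distK K (z u2))\<^sup>2"
  proof (rule right_dini_nonneg_imp_le[OF assms(2)])
    fix s assume "u1 \<le> s" "s < u2"
    then show "right_dini_ge (\<lambda>u. (distK K (z u))\<^sup>2) s 0"
      using right_dini_distK_sq_speed[of s] assms(1) by (auto elim: right_dini_ge_mono)
  next
    fix s assume "u1 < s" "s \<le> u2"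
    have "continuous_on {u1..u2} (\<lambda>u. (distK K (z u))\<^sup>2)"
      unfolding distK_def using continuous_on_interval[OF assms(1)] by (intro continuous_intros)
    then show "left_usc (\<lambda>u. (distK K (z u))\<^sup>2) s"
      using \<open>u1 < s\<close> \<open>s \<le> u2\<close> by (rule continuous_on_imp_left_usc)
  qed
  then show ?thesis
    by (rule power2_le_imp_le) (simp add: distK_def infdist_nonneg)
qed

lemma has_real_derivative_weighted_displacement:
  assumes "0 \<le> \<delta>" and "0 \<le> s"
  defines "a \<equiv> z s" and "b \<equiv> z (s + \<delta>)"
  shows "((\<lambda>u. - (exp (-2 * u) * (norm (z (u + \<delta>) - z u))\<^sup>2)) has_real_derivative
    2 * exp (-2 * s) * ((centerK K b - centerK K a) \<bullet> (b - a))) (at s within {s..})"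
proof -
  define E where "E u = (norm (z (u + \<delta>) - z u))\<^sup>2" for u
  have "((\<lambda>u. z (u + \<delta>) - z u) has_vector_derivative (b - centerK K b) - (a - centerK K a))
      (at s within {s..})"
    unfolding a_def b_def using assms(1,2)
    by (intro has_vector_derivative_diff has_vector_derivative_shift_right derivative) auto
  then have dE: "(E has_real_derivative 2 * ((b - a) \<bullet> ((b - centerK K b) - (a - centerK K a))))
      (at s within {s..})"
    unfolding E_def a_def b_def by (rule has_real_derivative_norm_sq)
  have dexp: "((\<lambda>u. exp (-2 * u)) has_real_derivative - 2 * exp (-2 * s)) (at s within {s..})"
    by (auto intro!: derivative_eq_intros)
  define I where "I = (centerK K b - centerK K a) \<bullet> (b - a)"
  have inner_eq: "(b - a) \<bullet> ((b - centerK K b) - (a - centerK K a)) = E s - I"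
    by (simp add: E_def I_def a_def b_def power2_norm_eq_inner inner_diff_right inner_commute)
  have "((\<lambda>u. - (exp (-2 * u) * E u)) has_real_derivative
      - (- 2 * exp (-2 * s) * E s + 2 * ((b - a) \<bullet> ((b - centerK K b) - (a - centerK K a))) * exp (-2 * s)))
      (at s within {s..})"
    using dexp dE by (intro DERIV_minus DERIV_mult)
  then have "((\<lambda>u. - (exp (-2 * u) * E u)) has_real_derivative 2 * exp (-2 * s) * I) (at s within {s..})"
    by (rule DERIV_cong) (simp only: inner_eq, simp add: algebra_simps)
  then show ?thesis
    by (simp add: E_def I_def)
qed

text \<open>Since \<open>centerK K\<close> is monotone, \<open>exp (-2 u) \<parallel>z (u + \<delta>) - z u\<parallel>\<^sup>2\<close> is nonincreasing.\<close>

lemma displacement_growth: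
  assumes "0 < \<delta>" and "0 \<le> u1" and "u1 \<le> u2"
  shows "norm (z (u2 + \<delta>) - z u2) \<le> exp (u2 - u1) * norm (z (u1 + \<delta>) - z u1)"
proof -
  define E where "E u = (norm (z (u + \<delta>) - z u))\<^sup>2" for u
  define \<phi> where "\<phi> u = - (exp (-2 * u) * E u)" for u
  have "\<phi> u1 \<le> \<phi> u2"
  proof (rule right_dini_nonneg_imp_le[OF assms(3)])
    fix s assume "u1 \<le> s" "s < u2"
    then have "0 \<le> s"
      using assms(2) by simp
    have "0 \<le> 2 * exp (-2 * s) * ((centerK K (z (s + \<delta>)) - centerK K (z s)) \<bullet> (z (s + \<delta>) - z s))"
      using centerK_monotone[OF closed nonempty] by simp
    with has_real_derivative_weighted_displacement[OF less_imp_le[OF assms(1)] \<open>0 \<le> s\<close>]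
    show "right_dini_ge \<phi> s 0"
      unfolding \<phi>_def[abs_def] E_def by (blast intro: right_dini_ge_mono has_real_derivative_imp_right_dini_ge)
  next
    fix s assume "u1 < s" "s \<le> u2"
    have "continuous_on {u1..u2} (\<lambda>u. z (u + \<delta>))"
      using continuous_on_interval[of "u1 + \<delta>" "u2 + \<delta>"] assms
      by (intro continuous_on_compose2[where g = z and f = "\<lambda>u. u + \<delta>"]) (auto intro!: continuous_intros)
    then have "continuous_on {u1..u2} \<phi>"
      unfolding \<phi>_def E_def using continuous_on_interval[OF assms(2)] by (intro continuous_intros)
    then show "left_usc \<phi> s"
      using \<open>u1 < s\<close> \<open>s \<le> u2\<close> by (rule continuous_on_imp_left_usc)
  qed
  then have "exp (2 * u2) * (exp (-2 * u2) * E u2) \<le> exp (2 * u2) * (exp (-2 * u1) * E u1)"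
    by (simp add: \<phi>_def)
  then have "E u2 \<le> (exp (u2 - u1) * norm (z (u1 + \<delta>) - z u1))\<^sup>2"
    by (simp add: E_def mult.assoc[symmetric] mult_exp_exp power_mult_distrib flip: exp_double)
  then show ?thesis
    unfolding E_def by (rule power2_le_imp_le) simp
qed

lemma speed_growth:
  assumes "0 \<le> u1" and "u1 \<le> u2"
  shows "norm (z u2 - centerK K (z u2)) \<le> exp (u2 - u1) * norm (z u1 - centerK K (z u1))"
proof -
  have quotient: "((\<lambda>\<delta>. (z (u + \<delta>) - z u) /\<^sub>R \<delta>) \<longlongrightarrow> z u - centerK K (z u)) (at_right 0)"
    if "0 \<le> u" for u
    unfolding tendsto_iff
  proof (intro allI impI)
    fix \<epsilon> :: real assume "0 < \<epsilon>"
    then have "0 < \<epsilon> / 2"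
      by simp
    from has_vector_derivative_right_approx[OF derivative[OF that] this] eventually_at_right_less[of 0]
    show "\<forall>\<^sub>F \<delta> in at_right 0. dist ((z (u + \<delta>) - z u) /\<^sub>R \<delta>) (z u - centerK K (z u)) < \<epsilon>"
    proof eventually_elim
      case (elim \<delta>)
      have "(z (u + \<delta>) - z u) /\<^sub>R \<delta> - (z u - centerK K (z u))
          = (z (u + \<delta>) - z u - \<delta> *\<^sub>R (z u - centerK K (z u))) /\<^sub>R \<delta>"
        using elim(2) by (simp add: scaleR_diff_right)
      then have "dist ((z (u + \<delta>) - z u) /\<^sub>R \<delta>) (z u - centerK K (z u))
          = norm (z (u + \<delta>) - z u - \<delta> *\<^sub>R (z u - centerK K (z u))) / \<delta>"
        using elim(2) by (simp add: dist_norm divide_inverse_commute)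
      also have "\<dots> \<le> \<epsilon> / 2"
        using elim by (simp add: pos_divide_le_eq)
      finally show ?case
        using \<open>0 < \<epsilon>\<close> by linarith
    qed
  qed
  have "\<forall>\<^sub>F \<delta> in at_right 0.
      norm ((z (u2 + \<delta>) - z u2) /\<^sub>R \<delta>) \<le> exp (u2 - u1) * norm ((z (u1 + \<delta>) - z u1) /\<^sub>R \<delta>)"
    using eventually_at_right_less[of 0]
  proof eventually_elim
    case (elim \<delta>)
    then show ?case
      using displacement_growth[OF elim assms] by (simp add: divide_right_mono)
  qed
  moreover have "((\<lambda>\<delta>. norm ((z (u + \<delta>) - z u) /\<^sub>R \<delta>)) \<longlongrightarrow> norm (z u - centerK K (z u))) (at_right 0)"
    if "0 \<le> u" for u
    using quotient[OF that] by (rule tendsto_norm)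
  ultimately show ?thesis
    using assms by (intro tendsto_le[OF trivial_limit_at_right_real] tendsto_mult_left) auto
qed

lemma right_dini_neg_speed_sq:
  assumes "0 \<le> s"
  shows "right_dini_ge (\<lambda>u. - (norm (z u - centerK K (z u)))\<^sup>2) s (- 2 * (norm (z s - centerK K (z s)))\<^sup>2)"
proof -
  define w where "w u = norm (z u - centerK K (z u))" for u
  have "right_dini_ge (\<lambda>u. - (w u)\<^sup>2) s (- 2 * (w s)\<^sup>2)"
  proof (rule right_dini_ge_minorant[where \<psi> = "\<lambda>h. - (exp h * w s)\<^sup>2"])
    show "\<forall>\<^sub>F h in at_right 0. - (exp h * w s)\<^sup>2 \<le> - (w (s + h))\<^sup>2"
      using eventually_at_right_less[of 0]
    proof eventually_elim
      case (elim h)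
      have "w (s + h) \<le> exp h * w s"
        using speed_growth[of s "s + h"] assms elim by (simp add: w_def)
      then show ?case
        by (simp add: w_def power_mono)
    qed
    show "((\<lambda>h. - (exp h * w s)\<^sup>2) has_real_derivative - 2 * (w s)\<^sup>2) (at 0 within {0..})"
      by (auto intro!: derivative_eq_intros simp: power2_eq_square)
  qed simp
  then show ?thesis
    by (simp add: w_def)
qed

lemma left_usc_FK_sq:
  assumes "0 < s"
  shows "left_usc (\<lambda>u. (FK K (z u))\<^sup>2) s"
  unfolding left_usc_def
proof (intro allI impI)
  fix \<epsilon> :: real assume "0 < \<epsilon>"
  define F where "F = FK K (z s)"
  have "0 \<le> F"
    unfolding F_def by (rule FK_nonneg[OF closed nonempty])
  define e where "e = min 1 (\<epsilon> / (2 * F + 1))"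
  have "0 < 2 * F + 1"
    using \<open>0 \<le> F\<close> by simp
  then have "0 < e" "e \<le> 1" "e * (2 * F + 1) \<le> \<epsilon>"
    using \<open>0 < \<epsilon>\<close> by (auto simp: e_def min_le_iff_disj simp flip: pos_le_divide_eq)
  have "\<forall>\<^sub>F r in at_left s. FK K (z r) \<le> F + e"
    using FK_upper_semicontinuous[OF closed nonempty \<open>0 < e\<close>] tendsto_at_left[OF assms]
    unfolding F_def by (rule eventually_compose_filterlim)
  then show "\<forall>\<^sub>F r in at_left s. (FK K (z r))\<^sup>2 \<le> (FK K (z s))\<^sup>2 + \<epsilon>"
  proof eventually_elim
    case (elim r)
    then have "(FK K (z r))\<^sup>2 \<le> (F + e)\<^sup>2"
      using FK_nonneg[OF closed nonempty] by (intro power_mono) auto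
    also have "\<dots> = F\<^sup>2 + e * (2 * F + e)"
      by (simp add: power2_eq_square algebra_simps)
    also have "e * (2 * F + e) \<le> e * (2 * F + 1)"
      using \<open>0 < e\<close> \<open>e \<le> 1\<close> by simp
    finally show ?case
      using \<open>e * (2 * F + 1) \<le> \<epsilon>\<close> by (simp add: F_def)
  qed
qed

lemma FK_mono:
  assumes "0 \<le> u1" and "u1 \<le> u2"
  shows "FK K (z u1) \<le> FK K (z u2)"
proof -
  have "(FK K (z u1))\<^sup>2 \<le> (FK K (z u2))\<^sup>2"
  proof (rule right_dini_nonneg_imp_le[OF assms(2)])
    fix s assume "u1 \<le> s" "s < u2"
    then have "0 \<le> s"
      using assms(1) by simp
    have "(\<lambda>u. (FK K (z u))\<^sup>2)
        = (\<lambda>u. (distK K (z u))\<^sup>2 + - (norm (z u - centerK K (z u)))\<^sup>2)"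
      using FK_sq[OF closed nonempty] by (simp add: fun_eq_iff)
    with right_dini_ge_add[OF right_dini_distK_sq_speed right_dini_neg_speed_sq, OF \<open>0 \<le> s\<close> \<open>0 \<le> s\<close>]
    show "right_dini_ge (\<lambda>u. (FK K (z u))\<^sup>2) s 0"
      by simp
  next
    fix s assume "u1 < s" "s \<le> u2"
    then show "left_usc (\<lambda>u. (FK K (z u))\<^sup>2) s"
      using assms(1) by (intro left_usc_FK_sq) simp
  qed
  then show ?thesis
    by (rule power2_le_imp_le) (rule FK_nonneg[OF closed nonempty])
qed

lemma below_axis_mono:
  assumes "0 \<le> \<alpha>" and "0 \<le> u1" and "u1 \<le> u2" and "\<alpha> < distK K (z u1)"
    and "(distK K (z u2) - \<alpha>) * FK K (z u2) \<le> l * distK K (z u2)"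
  shows "(distK K (z u1) - \<alpha>) * FK K (z u1) \<le> l * distK K (z u1)"
  using assms(1,4) distK_mono[OF assms(2,3)] FK_nonneg[OF closed nonempty] FK_mono[OF assms(2,3)]
    assms(5)
  by (rule offset_ratio_mono)

end

context center_flow
begin

lemma right_dini_distK:
  assumes "0 \<le> s" and "0 < distK K (z s)"
  shows "right_dini_ge (\<lambda>u. distK K (z u)) s ((norm (z s - centerK K (z s)))\<^sup>2 / distK K (z s))"
proof -
  define R where "R = distK K (z s)"
  define w where "w = norm (z s - centerK K (z s))"
  have "0 < R\<^sup>2"
    using assms(2) by (simp add: R_def)
  have "right_dini_ge (\<lambda>u. sqrt ((distK K (z u))\<^sup>2)) s (inverse (sqrt (R\<^sup>2)) / 2 * (2 * w\<^sup>2))"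
    using right_dini_distK_sq_speed[OF assms(1)] unfolding R_def w_def
  proof (rule right_dini_ge_chain)
    show "mono_on {0..} sqrt"
      by (auto intro: mono_onI)
    show "0 < (distK K (z s))\<^sup>2"
      using \<open>0 < R\<^sup>2\<close> by (simp only: R_def)
    show "(sqrt has_real_derivative inverse (sqrt ((distK K (z s))\<^sup>2)) / 2) (at ((distK K (z s))\<^sup>2))"
      using DERIV_real_sqrt[OF \<open>0 < R\<^sup>2\<close>] by (simp only: R_def)
  qed simp
  moreover have "(\<lambda>u. sqrt ((distK K (z u))\<^sup>2)) = (\<lambda>u. distK K (z u))"
    by (simp add: fun_eq_iff distK_def infdist_nonneg)
  moreover have "inverse (sqrt (R\<^sup>2)) / 2 * (2 * w\<^sup>2) = w\<^sup>2 / R"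
    using assms(2) by (simp add: R_def field_simps)
  ultimately show ?thesis
    by (simp add: R_def w_def)
qed

lemma right_dini_offset_gap:
  assumes "0 \<le> s" and "0 \<le> \<alpha>" and "0 < l" and "l < distK K (z s) - \<alpha>"
    and axis: "(distK K (z s) - \<alpha>) * FK K (z s) \<le> l * distK K (z s)"
  shows "right_dini_ge (\<lambda>u. sqrt ((distK K (z u) - \<alpha>)\<^sup>2 - l\<^sup>2)) s (norm (z s - centerK K (z s)))"
proof -
  define k where "k r = sqrt ((r - \<alpha>)\<^sup>2 - l\<^sup>2)" for r
  define R where "R = distK K (z s)"
  define w where "w = norm (z s - centerK K (z s))"
  have "l < R - \<alpha>"
    using assms(4) by (simp add: R_def)
  then have "0 < R"
    using assms(2,3) by simp
  have "0 < (R - \<alpha>)\<^sup>2 - l\<^sup>2"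
    using \<open>l < R - \<alpha>\<close> assms(3) by (simp add: power_strict_mono)
  have k': "(k has_real_derivative (R - \<alpha>) / k R) (at R)"
  proof -
    have "((\<lambda>r. (r - \<alpha>)\<^sup>2 - l\<^sup>2) has_real_derivative 2 * (R - \<alpha>)) (at R)"
      by (auto intro!: derivative_eq_intros)
    from DERIV_chain2[OF DERIV_real_sqrt[OF \<open>0 < (R - \<alpha>)\<^sup>2 - l\<^sup>2\<close>] this]
    show ?thesis
      unfolding k_def by (rule DERIV_cong) (use \<open>0 < (R - \<alpha>)\<^sup>2 - l\<^sup>2\<close> in \<open>simp add: field_simps\<close>)
  qed
  have "mono_on {\<alpha> + l..} k"
    unfolding k_def using assms(3) by (intro mono_onI real_sqrt_le_mono diff_right_mono power_mono) auto
  moreover have "0 \<le> (R - \<alpha>) / k R"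
    using \<open>l < R - \<alpha>\<close> assms(3) by (simp add: k_def)
  ultimately have "right_dini_ge (\<lambda>u. k (distK K (z u))) s ((R - \<alpha>) / k R * (w\<^sup>2 / R))"
    using right_dini_distK[OF assms(1)] \<open>0 < R\<close> k' \<open>l < R - \<alpha>\<close> unfolding R_def w_def
    by (intro right_dini_ge_chain[where c = "\<alpha> + l"]) auto
  moreover have "w \<le> (R - \<alpha>) / k R * (w\<^sup>2 / R)"
    unfolding k_def
  proof (rule speed_le_growth_rate[OF \<open>0 < R\<close> assms(3) \<open>l < R - \<alpha>\<close> FK_nonneg[OF closed nonempty]])
    show "(FK K (z s))\<^sup>2 = R\<^sup>2 - w\<^sup>2"
      using FK_sq[OF closed nonempty] by (simp add: R_def w_def)
  qed (use axis in \<open>simp_all add: R_def w_def\<close>)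
  ultimately show ?thesis
    unfolding k_def w_def by (rule right_dini_ge_mono)
qed

lemma chord_le:
  assumes "0 \<le> \<alpha>" and "0 < l" and "0 \<le> u1" and "u1 \<le> u2"
    and "l < distK K (z u1) - \<alpha>"
    and "(distK K (z u2) - \<alpha>) * FK K (z u2) \<le> l * distK K (z u2)"
  shows "norm (z u2 - z u1)
    \<le> sqrt ((distK K (z u2) - \<alpha>)\<^sup>2 - l\<^sup>2) - sqrt ((distK K (z u1) - \<alpha>)\<^sup>2 - l\<^sup>2)"
proof -
  define H where "H u = sqrt ((distK K (z u) - \<alpha>)\<^sup>2 - l\<^sup>2) + - norm (z u - z u1)" for u
  have "H u1 \<le> H u2"
  proof (rule right_dini_nonneg_imp_le[OF assms(4)])
    fix s assume "u1 \<le> s" "s < u2"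
    then have "0 \<le> s"
      using assms(3) by simp
    have "l < distK K (z s) - \<alpha>"
      using distK_mono[OF assms(3) \<open>u1 \<le> s\<close>] assms(5) by simp
    moreover have "(distK K (z s) - \<alpha>) * FK K (z s) \<le> l * distK K (z s)"
      using below_axis_mono[OF assms(1) \<open>0 \<le> s\<close>, of u2 l] \<open>s < u2\<close> assms(2,6) calculation by simp
    ultimately have "right_dini_ge H s (norm (z s - centerK K (z s)) + - norm (z s - centerK K (z s)))"
      unfolding H_def using \<open>0 \<le> s\<close> assms(1,2)
      by (intro right_dini_ge_add right_dini_offset_gap right_dini_ge_neg_norm derivative)
    then show "right_dini_ge H s 0"
      by simp
  next
    fix s assume "u1 < s" "s \<le> u2"
    have "continuous_on {u1..u2} H"
      unfolding H_def distK_def using continuous_on_interval[OF assms(3)]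
      by (intro continuous_intros)
    then show "left_usc H s"
      using \<open>u1 < s\<close> \<open>s \<le> u2\<close> by (rule continuous_on_imp_left_usc)
  qed
  then show ?thesis
    by (simp add: H_def)
qed

end

section \<open>Reparametrization of the gradient flow\<close>

lemma has_real_derivative_integral_upper:
  fixes r :: "real \<Rightarrow> real"
  assumes "continuous_on UNIV r" and "a < t"
  shows "((\<lambda>u. integral {a..u} r) has_real_derivative r t) (at t)"
proof -
  have "((\<lambda>u. integral {a..u} r) has_vector_derivative r t) (at t within {a..t+1})"
    using assms(2) by (intro integral_has_vector_derivative continuous_on_subset[OF assms(1)]) auto
  moreover have "at t within {a..t+1} = at t"
    using assms(2) by (intro at_within_interior) auto
  ultimately show ?thesis
    by (simp add: has_real_derivative_iff_has_vector_derivative)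
qed

lemma increasing_antiderivative_onto:
  fixes T r :: "real \<Rightarrow> real"
  assumes T': "\<And>t. -2 < t \<Longrightarrow> (T has_real_derivative r t) (at t)"
    and lower: "\<And>t. m \<le> r t" and "0 < m" and "T 0 = 0"
  shows "\<And>t1 t2. -1 \<le> t1 \<Longrightarrow> t1 < t2 \<Longrightarrow> T t1 < T t2"
    and "\<And>\<sigma>. T (-1/2) \<le> \<sigma> \<Longrightarrow> \<exists>t\<ge>-1. T t = \<sigma>"
proof -
  show T_less: "T t1 < T t2" if "-1 \<le> t1" "t1 < t2" for t1 t2
    using that(2)
  proof (rule DERIV_pos_imp_increasing)
    fix t assume "t1 \<le> t"
    then show "\<exists>D. (T has_real_derivative D) (at t) \<and> 0 < D"
      using T'[of t] lower[of t] \<open>0 < m\<close> that(1) by force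
  qed
  have T_ge: "m * t \<le> T t" if "0 \<le> t" for t
  proof -
    have "T 0 - m * 0 \<le> T t - m * t"
    proof (rule DERIV_nonneg_imp_nondecreasing[OF that])
      fix x :: real assume "0 \<le> x"
      then have "((\<lambda>t. T t - m * t) has_real_derivative r x - m) (at x)"
        using T'[of x] by (auto intro!: derivative_eq_intros)
      then show "\<exists>D. ((\<lambda>t. T t - m * t) has_real_derivative D) (at x) \<and> 0 \<le> D"
        using lower[of x] by auto
    qed
    then show ?thesis
      using \<open>T 0 = 0\<close> by simp
  qed
  have T_cont: "continuous_on {a..b} T" if "-2 < a" for a b
  proof (intro continuous_at_imp_continuous_on ballI)
    fix t assume "t \<in> {a..b}"
    then show "isCont T t"
      using that by (intro DERIV_isCont[OF T']) auto
  qed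
  show "\<exists>t\<ge>-1. T t = \<sigma>" if \<sigma>: "T (-1/2) \<le> \<sigma>" for \<sigma>
  proof (cases "0 \<le> \<sigma>")
    case True
    then have "T 0 \<le> \<sigma>" "\<sigma> \<le> T (\<sigma> / m)"
      using \<open>T 0 = 0\<close> T_ge[of "\<sigma> / m"] \<open>0 < m\<close> by auto
    moreover have "0 \<le> \<sigma> / m"
      using True \<open>0 < m\<close> by simp
    ultimately obtain t where "0 \<le> t" "T t = \<sigma>"
      using IVT'[of T 0 \<sigma> "\<sigma> / m"] T_cont[of 0 "\<sigma> / m"] by auto
    then show ?thesis
      by (intro exI[of _ t]) auto
  next
    case False
    then have "\<sigma> \<le> T 0"
      using \<open>T 0 = 0\<close> by simp
    then obtain t where "-1/2 \<le> t" "T t = \<sigma>"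
      using IVT'[of T "-1/2" \<sigma> 0] T_cont[of "-1/2" 0] \<sigma> by auto
    then show ?thesis
      by (intro exI[of _ t]) auto
  qed
qed

lemma inverse_antiderivative:
  fixes r :: "real \<Rightarrow> real"
  assumes cont: "continuous_on UNIV r" and lower: "\<And>t. m \<le> r t" and "0 < m"
  obtains T S where "T 0 = 0" and "\<And>t1 t2. 0 \<le> t1 \<Longrightarrow> t1 \<le> t2 \<Longrightarrow> T t1 \<le> T t2"
    and "\<And>t. 0 \<le> t \<Longrightarrow> 0 \<le> T t \<and> S (T t) = t"
    and "\<And>\<sigma>1 \<sigma>2. 0 \<le> \<sigma>1 \<Longrightarrow> \<sigma>1 \<le> \<sigma>2 \<Longrightarrow> 0 \<le> S \<sigma>1 \<and> S \<sigma>1 \<le> S \<sigma>2"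
    and "\<And>\<sigma>. 0 \<le> \<sigma> \<Longrightarrow> (S has_real_derivative inverse (r (S \<sigma>))) (at \<sigma>)"
proof -
  \<comment> \<open>Based at \<open>-2\<close>, so that \<open>T\<close> is differentiable on a neighbourhood of \<open>{0..}\<close>.\<close>
  define T where "T t = integral {-2..t} r - integral {-2..0} r" for t
  have T': "\<And>t. -2 < t \<Longrightarrow> (T has_real_derivative r t) (at t)"
    unfolding T_def using has_real_derivative_integral_upper[OF cont]
    by (auto intro!: derivative_eq_intros)
  have "T 0 = 0"
    by (simp add: T_def)
  have T_less: "T t1 < T t2" if "-1 \<le> t1" "t1 < t2" for t1 t2
    using T' lower \<open>0 < m\<close> \<open>T 0 = 0\<close> that by (rule increasing_antiderivative_onto(1))
  have onto: "\<exists>t\<ge>-1. T t = \<sigma>" if "T (-1/2) \<le> \<sigma>" for \<sigma>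
    using T' lower \<open>0 < m\<close> \<open>T 0 = 0\<close> that by (rule increasing_antiderivative_onto(2))
  have T_le: "T t1 \<le> T t2" if "-1 \<le> t1" "t1 \<le> t2" for t1 t2
    using that T_less by (cases "t1 = t2") (auto intro: less_imp_le)
  have "T (-1/2) < 0"
    using T_less[of "-1/2" 0] \<open>T 0 = 0\<close> by simp
  define S where "S \<sigma> = (THE t. -1 \<le> t \<and> T t = \<sigma>)" for \<sigma>
  have ST: "S (T t) = t" if "-1 \<le> t" for t
    unfolding S_def
  proof (rule the_equality)
    fix t' assume "-1 \<le> t' \<and> T t' = T t"
    then show "t' = t"
      using T_less that by (metis linorder_neqE_linordered_idom less_irrefl)
  qed (use that in simp)
  have TS: "-1 \<le> S \<sigma> \<and> T (S \<sigma>) = \<sigma>" if "T (-1/2) \<le> \<sigma>" for \<sigma>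
    using onto[OF that] ST by auto
  have S_nonneg: "0 \<le> S \<sigma>" if "0 \<le> \<sigma>" for \<sigma>
    using TS[of \<sigma>] T_less[of "S \<sigma>" 0] \<open>T 0 = 0\<close> \<open>T (-1/2) < 0\<close> that by fastforce
  have S_mono: "S \<sigma>1 \<le> S \<sigma>2" if "0 \<le> \<sigma>1" "\<sigma>1 \<le> \<sigma>2" for \<sigma>1 \<sigma>2
    using TS[of \<sigma>1] TS[of \<sigma>2] T_less[of "S \<sigma>2" "S \<sigma>1"] \<open>T (-1/2) < 0\<close> that by fastforce
  have S': "(S has_real_derivative inverse (r (S \<sigma>))) (at \<sigma>)" if "0 \<le> \<sigma>" for \<sigma>
  proof (rule DERIV_inverse_function)
    have "T (-1/2) \<le> \<sigma>"
      using \<open>T (-1/2) < 0\<close> that by simp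
    then show "(T has_real_derivative r (S \<sigma>)) (at (S \<sigma>))"
      using T' TS by force
    show "r (S \<sigma>) \<noteq> 0"
      using lower[of "S \<sigma>"] \<open>0 < m\<close> by auto
    show "T (-1/2) < \<sigma>" "\<sigma> < \<sigma> + 1"
      using \<open>T (-1/2) < 0\<close> that by auto
    show "T (S y) = y" if "T (-1/2) < y" for y
      using TS that by simp
    have "isCont S (T (S \<sigma>))"
      by (rule isCont_inverse_function[where d = 1])
        (use S_nonneg[OF that] in \<open>auto intro!: ST DERIV_isCont[OF T'] simp: abs_le_iff\<close>)
    then show "isCont S \<sigma>"
      using TS \<open>T (-1/2) \<le> \<sigma>\<close> by simp
  qed
  show ?thesis
  proof (rule that)
    show "0 \<le> T t \<and> S (T t) = t" if "0 \<le> t" for t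
      using T_le[of 0 t] \<open>T 0 = 0\<close> ST that by simp
  qed (use \<open>T 0 = 0\<close> T_le S_nonneg S_mono S' in auto)
qed

lemma distK_bounded_complement:
  fixes K :: "'a::euclidean_space set"
  assumes "bounded (- K)"
  obtains B where "0 < B" and "\<And>p. p \<notin> K \<Longrightarrow> distK K p \<le> B"
proof -
  obtain k where "k \<in> K"
    using assms not_bounded_UNIV by force
  obtain B where B: "\<And>p. p \<in> - K \<Longrightarrow> norm p \<le> B"
    using assms unfolding bounded_iff by blast
  have "distK K p \<le> max 1 (B + norm k)" if "p \<notin> K" for p
    using infdist_le[OF \<open>k \<in> K\<close>, of p] B[of p] that norm_triangle_ineq4[of p k]
    unfolding distK_def by (simp add: dist_norm)
  then show ?thesis
    using that[of "max 1 (B + norm k)"] by simp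
qed

text \<open>The time change \<open>du = dt / R\<close> turns \<open>\<nabla>\<^sub>K = (x - c(x)) / R\<close> into the center flow.\<close>

lemma center_flow_time_change:
  fixes K :: "'a::euclidean_space set"
  assumes "closed K" and "K \<noteq> {}"
    and x_out: "\<And>t. 0 \<le> t \<Longrightarrow> x t \<notin> K" and x_cont: "continuous_on {0..} x"
    and x': "\<And>t. 0 \<le> t \<Longrightarrow> (x has_vector_derivative gradK K (x t)) (at t within {t..})"
    and S_mono: "\<And>\<sigma>1 \<sigma>2. 0 \<le> \<sigma>1 \<Longrightarrow> \<sigma>1 \<le> \<sigma>2 \<Longrightarrow> 0 \<le> S \<sigma>1 \<and> S \<sigma>1 \<le> S \<sigma>2"
    and S': "\<And>\<sigma>. 0 \<le> \<sigma> \<Longrightarrow> (S has_real_derivative distK K (x (S \<sigma>))) (at \<sigma>)"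
  shows "center_flow K (\<lambda>u. x (S u))"
proof
  show "closed K" "K \<noteq> {}"
    by (fact assms(1), fact assms(2))
  show "x (S u) \<notin> K" if "0 \<le> u" for u
    using x_out S_mono[OF that order_refl] by blast
  have "continuous_on {0..} S"
    using S' by (intro continuous_at_imp_continuous_on) (auto intro: DERIV_isCont)
  then show "continuous_on {0..} (\<lambda>u. x (S u))"
    by (rule continuous_on_compose2[OF x_cont]) (use S_mono in auto)
  show "((\<lambda>u. x (S u)) has_vector_derivative x (S u) - centerK K (x (S u))) (at u within {u..})"
    if "0 \<le> u" for u
  proof -
    have "0 \<le> S u"
      using S_mono[OF that order_refl] by blast
    have "(S has_vector_derivative distK K (x (S u))) (at u within {u..})"
      using S'[OF that] by (auto simp: has_real_derivative_iff_has_vector_derivative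
          intro: has_vector_derivative_at_within)
    moreover have "(x has_vector_derivative gradK K (x (S u))) (at (S u) within S ` {u..})"
      using x'[OF \<open>0 \<le> S u\<close>] by (rule has_vector_derivative_within_subset) (use S_mono that in auto)
    ultimately have "((x \<circ> S) has_vector_derivative distK K (x (S u)) *\<^sub>R gradK K (x (S u)))
        (at u within {u..})"
      by (rule vector_diff_chain_within)
    moreover have "distK K (x (S u)) *\<^sub>R gradK K (x (S u)) = x (S u) - centerK K (x (S u))"
      unfolding gradK_def centerK_def using distK_pos[OF assms(1,2) x_out[OF \<open>0 \<le> S u\<close>]] by simp
    ultimately show ?thesis
      by (simp add: o_def)
  qed
qed

lemma is_flow_reparametrization:
  fixes K :: "'a::euclidean_space set"
  assumes "closed K" and "bounded (- K)" and flow: "is_flow K Phi" and "y \<notin> K"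
  obtains z T where "center_flow K z" and "T 0 = 0"
    and "\<And>t. 0 \<le> t \<Longrightarrow> 0 \<le> T t \<and> Phi t y = z (T t)"
    and "\<And>t1 t2. 0 \<le> t1 \<Longrightarrow> t1 \<le> t2 \<Longrightarrow> T t1 \<le> T t2"
proof -
  define x where "x t = Phi t y" for t
  have x_out: "x t \<notin> K" if "0 \<le> t" for t
    using flow \<open>y \<notin> K\<close> that unfolding is_flow_def x_def by auto
  have x': "(x has_vector_derivative gradK K (x t)) (at t within {t..})" if "0 \<le> t" for t
    using flow \<open>y \<notin> K\<close> that unfolding is_flow_def x_def by auto
  have "continuous_on ({0..} \<times> - K) (\<lambda>(t, x). Phi t x)"
    using flow unfolding is_flow_def by blast
  then have "continuous_on {0..} (\<lambda>t. (\<lambda>(t, x). Phi t x) (t, y))"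
    by (rule continuous_on_compose2) (use \<open>y \<notin> K\<close> in \<open>auto intro!: continuous_intros\<close>)
  then have x_cont: "continuous_on {0..} x"
    by (simp add: x_def)
  have "K \<noteq> {}"
    using assms(2) not_bounded_UNIV by force
  obtain B where "0 < B" and B: "\<And>p. p \<notin> K \<Longrightarrow> distK K p \<le> B"
    using distK_bounded_complement[OF assms(2)] by blast
  have R_pos: "0 < distK K (x t)" if "0 \<le> t" for t
    using distK_pos[OF assms(1) \<open>K \<noteq> {}\<close> x_out[OF that]] .
  define r where "r s = inverse (distK K (x (max 0 s)))" for s
  have "continuous_on UNIV (\<lambda>s. x (max 0 s))"
    by (rule continuous_on_compose2[OF x_cont]) (auto intro!: continuous_intros)
  moreover have "infdist (x (max 0 s)) K \<noteq> 0" for s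
    using R_pos[of "max 0 s"] by (simp add: distK_def)
  ultimately have "continuous_on UNIV r"
    unfolding r_def distK_def by (intro continuous_intros) auto
  moreover have "inverse B \<le> r s" for s
    unfolding r_def using R_pos[of "max 0 s"] B[OF x_out[of "max 0 s"]] by (intro le_imp_inverse_le) auto
  ultimately obtain T S where "T 0 = 0" and T_mono: "\<And>t1 t2. 0 \<le> t1 \<Longrightarrow> t1 \<le> t2 \<Longrightarrow> T t1 \<le> T t2"
    and ST: "\<And>t. 0 \<le> t \<Longrightarrow> 0 \<le> T t \<and> S (T t) = t"
    and S_mono: "\<And>\<sigma>1 \<sigma>2. 0 \<le> \<sigma>1 \<Longrightarrow> \<sigma>1 \<le> \<sigma>2 \<Longrightarrow> 0 \<le> S \<sigma>1 \<and> S \<sigma>1 \<le> S \<sigma>2"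
    and S': "\<And>\<sigma>. 0 \<le> \<sigma> \<Longrightarrow> (S has_real_derivative inverse (r (S \<sigma>))) (at \<sigma>)"
    using inverse_antiderivative[of r "inverse B"] \<open>0 < B\<close> by auto
  have S_deriv: "(S has_real_derivative distK K (x (S \<sigma>))) (at \<sigma>)" if "0 \<le> \<sigma>" for \<sigma>
    using S'[OF that] S_mono[OF that order_refl] by (simp add: r_def)
  have "center_flow K (\<lambda>u. x (S u))"
    using assms(1) \<open>K \<noteq> {}\<close> x_out x_cont x' S_mono S_deriv by (rule center_flow_time_change)
  then show ?thesis
    using that \<open>T 0 = 0\<close> ST T_mono by (auto simp: x_def)
qed

section \<open>Offsets and arc length\<close>

lemma closed_offset: "closed (offset K \<alpha>)"
  unfolding offset_def by (intro closed_Collect_le continuous_intros)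

lemma subset_offset: "0 \<le> \<alpha> \<Longrightarrow> K \<subseteq> offset K \<alpha>"
  by (auto simp: offset_def)

lemma homothety_into_offset:
  fixes K :: "'a::euclidean_space set"
  assumes "\<theta> \<in> Theta K p" and "0 \<le> \<alpha>" and "\<alpha> < distK K p"
  defines "q \<equiv> p + ((distK K p - \<alpha>) / distK K p) *\<^sub>R (\<theta> - p)"
  shows "q \<in> offset K \<alpha>" and "dist p q = distK K p - \<alpha>"
proof -
  define R where "R = distK K p"
  have "0 < R" "dist p \<theta> = R" "\<theta> \<in> K"
    using assms(1-3) unfolding R_def Theta_def by auto
  have "dist p q = (R - \<alpha>) / R * dist p \<theta>"
    using \<open>0 < R\<close> assms(3) by (simp add: q_def R_def dist_norm norm_minus_commute)
  then show "dist p q = distK K p - \<alpha>"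
    using \<open>0 < R\<close> \<open>dist p \<theta> = R\<close> by (simp add: R_def)
  have "q - \<theta> = (1 - (R - \<alpha>) / R) *\<^sub>R (p - \<theta>)"
    by (simp add: q_def R_def algebra_simps)
  also have "1 - (R - \<alpha>) / R = \<alpha> / R"
    using \<open>0 < R\<close> by (simp add: field_simps)
  finally have "q - \<theta> = (\<alpha> / R) *\<^sub>R (p - \<theta>)" .
  then have "dist q \<theta> = \<alpha>"
    using \<open>0 < R\<close> \<open>dist p \<theta> = R\<close> assms(2) by (simp add: dist_norm)
  then show "q \<in> offset K \<alpha>"
    using infdist_le[OF \<open>\<theta> \<in> K\<close>, of q] unfolding offset_def by simp
qed

lemma distK_offset:
  fixes K :: "'a::euclidean_space set"
  assumes "closed K" and "K \<noteq> {}" and "0 \<le> \<alpha>" and "\<alpha> < distK K p"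
  shows "distK (offset K \<alpha>) p = distK K p - \<alpha>"
proof (rule antisym)
  obtain \<theta> where "\<theta> \<in> Theta K p"
    using Theta_nonempty[OF assms(1,2)] by blast
  from homothety_into_offset[OF this assms(3,4)]
  show "distK (offset K \<alpha>) p \<le> distK K p - \<alpha>"
    unfolding distK_def by (metis infdist_le)
  obtain q where "q \<in> offset K \<alpha>" and "infdist p (offset K \<alpha>) = dist p q"
    using infdist_attains_inf[OF closed_offset, of K \<alpha> p] subset_offset[OF assms(3)] assms(2) by blast
  then show "distK K p - \<alpha> \<le> distK (offset K \<alpha>) p"
    using infdist_triangle[of p K q] unfolding distK_def offset_def by (simp add: dist_commute)
qed

text \<open>The homothety of center \<open>p\<close> and ratio \<open>(R - \<alpha>) / R\<close> maps the nearest points of \<open>K\<close>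
  to nearest points of the offset.\<close>

lemma FK_offset_ge:
  fixes K :: "'a::euclidean_space set"
  assumes "closed K" and "K \<noteq> {}" and "0 \<le> \<alpha>" and "\<alpha> < distK K p"
  shows "(distK K p - \<alpha>) * FK K p \<le> FK (offset K \<alpha>) p * distK K p"
proof -
  define R where "R = distK K p"
  define k where "k = (R - \<alpha>) / R"
  have "0 < R" "0 < k"
    using assms(3,4) by (auto simp: R_def k_def)
  define c where "c = centerK (offset K \<alpha>) p"
  have "offset K \<alpha> \<noteq> {}"
    using subset_offset[OF assms(3)] assms(2) by blast
  have "Theta K p \<subseteq> cball (p + (1 / k) *\<^sub>R (c - p)) (FK (offset K \<alpha>) p / k)"
  proof
    fix \<theta> assume "\<theta> \<in> Theta K p"
    define q where "q = p + k *\<^sub>R (\<theta> - p)"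
    have "q \<in> Theta (offset K \<alpha>) p"
      using homothety_into_offset[OF \<open>\<theta> \<in> Theta K p\<close> assms(3,4)] distK_offset[OF assms]
      unfolding Theta_def q_def k_def R_def by simp
    then have "dist c q \<le> FK (offset K \<alpha>) p"
      unfolding c_def by (rule dist_centerK_le_FK[OF closed_offset \<open>offset K \<alpha> \<noteq> {}\<close>])
    moreover have "c - q = k *\<^sub>R ((p + (1 / k) *\<^sub>R (c - p)) - \<theta>)"
      using \<open>0 < k\<close> by (simp add: q_def scaleR_diff_right scaleR_add_right)
    then have "dist c q = k * dist (p + (1 / k) *\<^sub>R (c - p)) \<theta>"
      using \<open>0 < k\<close> by (simp add: dist_norm)
    ultimately show "\<theta> \<in> cball (p + (1 / k) *\<^sub>R (c - p)) (FK (offset K \<alpha>) p / k)"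
      using \<open>0 < k\<close> by (simp add: pos_le_divide_eq mult.commute)
  qed
  then have "FK K p \<le> FK (offset K \<alpha>) p / k"
    unfolding FK_def using Theta_nonempty[OF assms(1,2)] by (rule enc_radius_le[rotated])
  then show ?thesis
    using \<open>0 < R\<close> \<open>0 < k\<close> by (simp add: k_def R_def field_simps)
qed

lemma arc_length_le_increment:
  fixes \<gamma> :: "real \<Rightarrow> 'a::metric_space" and g :: "real \<Rightarrow> real"
  assumes "0 \<le> t" and chord: "\<And>a b. 0 \<le> a \<Longrightarrow> a \<le> b \<Longrightarrow> b \<le> t \<Longrightarrow> dist (\<gamma> a) (\<gamma> b) \<le> g b - g a"
  shows "arc_length \<gamma> 0 t \<le> g t - g 0"
  unfolding arc_length_def
proof (rule cSup_least)
  let ?p = "\<lambda>i::nat. if i = 0 then 0 else t"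
  have "(\<Sum>i<1. dist (\<gamma> (?p i)) (\<gamma> (?p (Suc i))))
      \<in> {\<Sum>i<n. dist (\<gamma> (p i)) (\<gamma> (p (Suc i))) |p n. p 0 = 0 \<and> p n = t \<and> (\<forall>i<n. p i \<le> p (Suc i))}"
    using assms(1) by (intro CollectI exI[of _ ?p] exI[of _ "1::nat"]) simp
  then show "{\<Sum>i<n. dist (\<gamma> (p i)) (\<gamma> (p (Suc i))) |p n. p 0 = 0 \<and> p n = t \<and> (\<forall>i<n. p i \<le> p (Suc i))} \<noteq> {}"
    by blast
next
  fix s assume "s \<in> {\<Sum>i<n. dist (\<gamma> (p i)) (\<gamma> (p (Suc i))) |p n. p 0 = 0 \<and> p n = t \<and> (\<forall>i<n. p i \<le> p (Suc i))}"
  then obtain p n where s: "s = (\<Sum>i<n. dist (\<gamma> (p i)) (\<gamma> (p (Suc i))))"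
    and p: "p 0 = 0" "p n = t" "\<forall>i<n. p i \<le> p (Suc i)"
    by blast
  define q where "q i = p (min i n)" for i
  have "mono q"
    unfolding mono_iff_le_Suc
  proof
    fix i
    show "q i \<le> q (Suc i)"
      using p(3) by (cases "i < n") (simp_all add: q_def min_absorb1 min_absorb2)
  qed
  have q_range: "0 \<le> q i" "q i \<le> t" for i
    using monoD[OF \<open>mono q\<close>, of 0 i] monoD[OF \<open>mono q\<close>, of i "max i n"] p(1,2)
    by (simp_all add: q_def)
  have "(\<Sum>i<m. dist (\<gamma> (q i)) (\<gamma> (q (Suc i)))) \<le> g (q m) - g (q 0)" for m
  proof (induction m)
    case (Suc m)
    have "dist (\<gamma> (q m)) (\<gamma> (q (Suc m))) \<le> g (q (Suc m)) - g (q m)"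
      using chord q_range monoD[OF \<open>mono q\<close>, of m "Suc m"] by simp
    with Suc.IH show ?case
      by simp
  qed simp
  from this[of n] show "s \<le> g t - g 0"
    using p(1,2) by (simp add: s q_def)
qed

lemma is_flow_chord_le:
  fixes K :: "'a::euclidean_space set"
  assumes "closed K" and "bounded (- K)" and "is_flow K Phi"
    and "0 \<le> \<alpha>" and "0 < l" and "l < distK K y - \<alpha>" and "Phi t y \<notin> axis l \<alpha> K"
    and "0 \<le> a" and "a \<le> b" and "b \<le> t"
  shows "dist (Phi a y) (Phi b y)
    \<le> sqrt ((distK K (Phi b y) - \<alpha>)\<^sup>2 - l\<^sup>2) - sqrt ((distK K (Phi a y) - \<alpha>)\<^sup>2 - l\<^sup>2)"
proof -
  have "K \<noteq> {}"
    using assms(2) not_bounded_UNIV by force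
  have "y \<notin> K"
    using assms(4-6) by (auto simp: distK_def)
  obtain z T where "center_flow K z" and "T 0 = 0" and T: "\<And>t. 0 \<le> t \<Longrightarrow> 0 \<le> T t \<and> Phi t y = z (T t)"
    and T_mono: "\<And>t1 t2. 0 \<le> t1 \<Longrightarrow> t1 \<le> t2 \<Longrightarrow> T t1 \<le> T t2"
    using is_flow_reparametrization[OF assms(1-3) \<open>y \<notin> K\<close>] by blast
  interpret center_flow K z
    by fact
  have "z 0 = y"
    using T[of 0] \<open>T 0 = 0\<close> assms(3) \<open>y \<notin> K\<close> by (simp add: is_flow_def)
  have start: "l < distK K (z u) - \<alpha>" if "0 \<le> u" for u
    using distK_mono[OF order_refl that] assms(6) \<open>z 0 = y\<close> by simp
  have "0 \<le> T a" "T a \<le> T b" "T b \<le> T t"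
    using T T_mono assms(8-10) by auto
  have "(distK K (z (T t)) - \<alpha>) * FK K (z (T t)) \<le> FK (offset K \<alpha>) (z (T t)) * distK K (z (T t))"
    using FK_offset_ge[OF assms(1) \<open>K \<noteq> {}\<close> assms(4)] start[of "T t"] assms(5) T assms(8-10) by simp
  also have "\<dots> \<le> l * distK K (z (T t))"
    using assms(7) T[of t] start[of "T t"] assms(4,5,8-10) by (simp add: axis_def mult_right_mono)
  finally have "(distK K (z (T t)) - \<alpha>) * FK K (z (T t)) \<le> l * distK K (z (T t))" .
  then have "(distK K (z (T b)) - \<alpha>) * FK K (z (T b)) \<le> l * distK K (z (T b))"
    using below_axis_mono[OF assms(4), of "T b" "T t"] start[of "T b"] \<open>0 \<le> T a\<close> \<open>T a \<le> T b\<close>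
      \<open>T b \<le> T t\<close> assms(5)
    by simp
  then show ?thesis
    using chord_le[OF assms(4,5) \<open>0 \<le> T a\<close> \<open>T a \<le> T b\<close> start] T assms(8-10)
    by (simp add: dist_norm norm_minus_commute)
qed

theorem lemma10p1:
  fixes K :: "'a::euclidean_space set" and Phi :: "real \<Rightarrow> 'a \<Rightarrow> 'a"
    and \<alpha> l t :: real and y :: 'a
  assumes "closed K" and "bounded (- K)"
    and "is_flow K Phi"
    and "\<alpha> \<ge> 0" and "l > 0"
    and "y \<in> - offset K \<alpha> - axis l \<alpha> K"
    and "distK K y - \<alpha> > l"
    and "t \<ge> 0" and "arc_length (\<lambda>\<tau>. Phi \<tau> y) 0 t > 0"
    and "Phi t y \<notin> axis l \<alpha> K"
  shows "(distK K (Phi t y) - \<alpha>)\<^sup>2 \<ge>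
           (sqrt ((distK K y - \<alpha>)\<^sup>2 - l\<^sup>2) + arc_length (\<lambda>\<tau>. Phi \<tau> y) 0 t)\<^sup>2 + l\<^sup>2"
proof -
  define G where "G p = sqrt ((distK K p - \<alpha>)\<^sup>2 - l\<^sup>2)" for p
  define L where "L = arc_length (\<lambda>\<tau>. Phi \<tau> y) 0 t"
  have "y \<notin> K"
    using assms(4,5,7) by (auto simp: distK_def)
  then have "Phi 0 y = y"
    using assms(3) by (simp add: is_flow_def)
  have "L \<le> G (Phi t y) - G (Phi 0 y)"
    unfolding L_def G_def using assms(8)
    by (rule arc_length_le_increment) (rule is_flow_chord_le[OF assms(1-5,7,10)])
  moreover have "0 \<le> G y"
    using assms(5,7) by (simp add: G_def power_mono)
  ultimately have "0 \<le> G y + L" "G y + L \<le> G (Phi t y)"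
    using assms(9) \<open>Phi 0 y = y\<close> by (simp_all add: L_def)
  then have "(G y + L)\<^sup>2 \<le> (G (Phi t y))\<^sup>2"
    by (simp add: power_mono)
  moreover have "0 \<le> G (Phi t y)"
    using \<open>0 \<le> G y + L\<close> \<open>G y + L \<le> G (Phi t y)\<close> by linarith
  ultimately have "(G y + L)\<^sup>2 \<le> (distK K (Phi t y) - \<alpha>)\<^sup>2 - l\<^sup>2"
    by (simp add: G_def)
  then show ?thesis
    by (simp add: G_def L_def)
qed

end
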